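(* Let $\mu<0$, $k=e^{-\mu}>1$, $g_c=g_c(k)=k/(1+k)^2$, and let $T_0\in\mathcal T_{\rm fin}$ have height $r$ with $K=|D_r(T_0)|$ vertices at height $r$. For each $M\in\mathbb N$ there exists $d>0$ such that, as $N\to\infty$, $$\nu_N^{(\mu)}\big(\mathcal B_{1/r}(T_0)\big)\ \ge\ K\,k^{r-1}g_c^{|T_0|-K}\Big(\sum_{S=1}^MC_{S-1}g_c^S\Big)^{K-1}\big(1+O(e^{-dN})\big).$$
   Context: Rooted planar trees: vertices at height $r$ form the ordered set $D_r(T)$, $D_0=\{$root$\}$, $|D_1|=1$; $|T|$ = number of edges; $h(T)$ = height. $\mathcal B_{1/r}(T_0)=\{T: B_r(T)=T_0\}$ where $B_r(T)$ is the subtree spanned by vertices of height $\le r$. $Z_N^{(\mu)}=\sum_{|T|=N}e^{-\mu h(T)}$ and $\nu_N^{(\mu)}$ is the probability measure on trees of size $N$ with $\nu_N^{(\mu)}(T)=e^{-\mu h(T)}/Z_N^{(\mu)}$. $C_n=\frac{(2n)!}{n!(n+1)!}$ are the Catalan numbers. *)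

theory Defs
  imports "HOL-Analysis.Analysis" "HOL-Library.Landau_Symbols"
begin

datatype ptree = Node "ptree list"

fun edges :: "ptree \<Rightarrow> nat" where
  "edges (Node ts) = sum_list (map (\<lambda>t. edges t + 1) ts)"

fun height :: "ptree \<Rightarrow> nat" where
  "height (Node ts) = foldr (\<lambda>t m. max (Suc (height t)) m) ts 0"

fun level_count :: "nat \<Rightarrow> ptree \<Rightarrow> nat" where
  "level_count 0 t = 1"
| "level_count (Suc n) (Node ts) = sum_list (map (level_count n) ts)"

fun truncate :: "nat \<Rightarrow> ptree \<Rightarrow> ptree" where
  "truncate 0 t = Node []"
| "truncate (Suc n) (Node ts) = Node (map (truncate n) ts)"

text \<open>Standing convention |D_1(T)| = 1: the root has exactly one child.\<close>
definition planted :: "ptree \<Rightarrow> bool" where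
  "planted T \<longleftrightarrow> level_count 1 T = 1"

definition trees_of_size :: "nat \<Rightarrow> ptree set" where
  "trees_of_size N = {T. planted T \<and> edges T = N}"

definition Zpart :: "real \<Rightarrow> nat \<Rightarrow> real" where
  "Zpart \<mu> N = (\<Sum>T\<in>trees_of_size N. exp (- \<mu> * real (height T)))"

definition nu :: "real \<Rightarrow> nat \<Rightarrow> ptree set \<Rightarrow> real" where
  "nu \<mu> N A = (\<Sum>T\<in>trees_of_size N \<inter> A. exp (- \<mu> * real (height T))) / Zpart \<mu> N"

definition ball_tree :: "nat \<Rightarrow> ptree \<Rightarrow> ptree set" where
  "ball_tree r T0 = {T. planted T \<and> truncate r T = T0}"

definition catalan :: "nat \<Rightarrow> real" where
  "catalan n = fact (2*n) / (fact n * fact (n+1))"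

end

theory Submission
  imports Defs "HOL-Complex_Analysis.Cauchy_Integral_Formula"
begin

text \<open>Let \<open>q n\<close> be \<open>g\<^sub>c ^ n\<close> times the sum of \<open>k ^ height t\<close> over all trees \<open>t\<close> with \<open>n\<close>
  edges, so that \<open>Z (n + 1) = k * q n / g\<^sub>c ^ n\<close>. Cutting off a highest subtree of the root gives
  the renewal inequality \<open>q n \<le> (\<Sum>m<n. a m * q (n - 1 - m))\<close> with
  \<open>a m = k * C (m + 1) * g\<^sub>c ^ (m + 1)\<close>, and \<open>\<Sum>m. a m = 1\<close> precisely because \<open>g\<^sub>c\<close> is the
  critical point of the Catalan generating function. The inequality is strict only for trees in which
  a sibling of the highest subtree is nearly as high, an exponentially small defect, so the
  exponential renewal theorem (the generating function of the tails of \<open>a\<close> has no zeros in a disc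
  of radius \<open>> 1\<close>) gives \<open>q n \<longrightarrow> L > 0\<close> at an exponential rate. Trees in the ball are produced by
  grafting onto the \<open>K\<close> top vertices of \<open>T0\<close> one tall tree and \<open>K - 1\<close> trees with fewer than
  \<open>M\<close> edges; comparing with \<open>Z N\<close> leaves a ratio of values of \<open>q\<close> at nearby arguments, which is
  \<open>1 + O(exp (- d N))\<close>.\<close>

section \<open>The exponential renewal theorem\<close>

lemma linear_times_geometric_le:
  fixes \<eta> :: real
  assumes "0 < \<eta>" "\<eta> < 1"
  shows "\<exists>C. \<forall>n. real n * \<eta> ^ n \<le> C * ((1 + \<eta>) / 2) ^ n"
proof -
  define \<rho> where "\<rho> = 2 * \<eta> / (1 + \<eta>)"
  have \<rho>: "0 < \<rho>" "\<rho> < 1" "\<rho> * ((1 + \<eta>) / 2) = \<eta>"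
    unfolding \<rho>_def using assms by (auto simp: field_simps)
  define \<delta> where "\<delta> = 1 / \<rho> - 1"
  have \<delta>: "0 < \<delta>" unfolding \<delta>_def using \<rho> by (simp add: field_simps)
  have "real n * \<rho> ^ n \<le> 1 / \<delta>" for n
  proof -
    have "1 + real n * \<delta> \<le> (1 + \<delta>) ^ n" using \<delta> by (intro Bernoulli_inequality) simp
    then have "real n * \<delta> * \<rho> ^ n \<le> (1 / \<rho>) ^ n * \<rho> ^ n"
      unfolding \<delta>_def using \<rho> by (intro mult_right_mono) auto
    also have "\<dots> = 1" using \<rho> by (simp add: power_one_over field_simps)
    finally show ?thesis using \<delta> by (simp add: field_simps)
  qed
  then have "real n * \<rho> ^ n * ((1 + \<eta>) / 2) ^ n \<le> (1 / \<delta>) * ((1 + \<eta>) / 2) ^ n" for n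
    using assms by (intro mult_right_mono) auto
  moreover have "\<rho> ^ n * ((1 + \<eta>) / 2) ^ n = \<eta> ^ n" for n
    by (simp only: \<rho>(3) flip: power_mult_distrib)
  ultimately have "real n * \<eta> ^ n \<le> (1 / \<delta>) * ((1 + \<eta>) / 2) ^ n" for n
    by (simp add: mult.assoc)
  then show ?thesis by blast
qed

lemma geometric_tail_le:
  fixes f :: "nat \<Rightarrow> 'a::banach"
  assumes f: "\<And>n. norm (f n) \<le> C * \<theta> ^ n" and \<theta>: "0 \<le> \<theta>" "\<theta> < 1"
  shows "summable f" "norm (suminf f - (\<Sum>j<n. f j)) \<le> C * \<theta> ^ n / (1 - \<theta>)"
proof -
  have shifted: "summable (\<lambda>j. C * \<theta> ^ (j + n))" for n
    using summable_mult[OF summable_geometric, of \<theta> "C * \<theta> ^ n"] \<theta>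
    by (simp add: power_add mult_ac)
  show sf: "summable f"
    by (rule summable_comparison_test'[OF shifted[of 0]]) (use f in simp)
  have sn: "summable (\<lambda>j. norm (f (j + n)))"
    by (rule summable_comparison_test'[OF shifted]) (use f in auto)
  have "norm (suminf f - (\<Sum>j<n. f j)) = norm (\<Sum>j. f (j + n))"
    using suminf_split_initial_segment[OF sf, of n] by simp
  also have "\<dots> \<le> (\<Sum>j. norm (f (j + n)))" by (rule summable_norm[OF sn])
  also have "\<dots> \<le> (\<Sum>j. C * \<theta> ^ (j + n))" by (intro suminf_le sn shifted) (use f in auto)
  also have "\<dots> = C * \<theta> ^ n / (1 - \<theta>)"
    using \<theta> suminf_mult[OF summable_geometric, of \<theta> "C * \<theta> ^ n"]
    by (simp add: suminf_geometric power_add mult_ac)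
  finally show "norm (suminf f - (\<Sum>j<n. f j)) \<le> C * \<theta> ^ n / (1 - \<theta>)" .
qed

lemma geometric_tail_shift_le:
  fixes C \<theta> \<eta> :: real
  assumes "0 \<le> C" "0 \<le> \<theta>" "\<theta> \<le> \<eta>" "\<eta> < 1"
  shows "C * \<theta> ^ Suc n / (1 - \<theta>) \<le> C / (1 - \<theta>) * \<eta> ^ n"
proof -
  have "\<theta> ^ Suc n \<le> \<theta> ^ n" using assms by (intro power_decreasing) auto
  also have "\<dots> \<le> \<eta> ^ n" using assms by (intro power_mono) auto
  finally have "C * \<theta> ^ Suc n \<le> C * \<eta> ^ n" using assms(1) by (rule mult_left_mono)
  then show ?thesis using assms by (simp add: divide_right_mono)
qed

lemma fps_conv_radius_ge_geometric:
  fixes F :: "complex fps"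
  assumes "\<And>n. norm (fps_nth F n) \<le> C * \<kappa> ^ n" "0 < \<kappa>"
  shows "ereal (1 / \<kappa>) \<le> fps_conv_radius F"
  unfolding fps_conv_radius_def
proof (rule conv_radius_geI_ex')
  fix r :: real assume r: "0 < r" "ereal r < ereal (1 / \<kappa>)"
  have "\<kappa> * r < 1" using r assms(2) by (simp add: field_simps)
  then have gs: "summable (\<lambda>n. C * (\<kappa> * r) ^ n)"
    using r assms(2) by (intro summable_mult summable_geometric) auto
  show "summable (\<lambda>n. fps_nth F n * of_real r ^ n)"
  proof (rule summable_comparison_test'[OF gs])
    fix n
    have "norm (fps_nth F n * of_real r ^ n) = norm (fps_nth F n) * r ^ n"
      using r by (simp add: norm_mult norm_power)
    also have "\<dots> \<le> C * \<kappa> ^ n * r ^ n" using r assms by (intro mult_right_mono) auto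
    finally show "norm (fps_nth F n * of_real r ^ n) \<le> C * (\<kappa> * r) ^ n"
      by (simp add: power_mult_distrib)
  qed
qed

lemma norm_convolution_geometric_le:
  fixes e v :: "nat \<Rightarrow> 'a::real_normed_algebra"
  assumes e: "\<And>i. norm (e i) \<le> D * \<eta> ^ i" and v: "\<And>j. norm (v j) \<le> K * \<eta> ^ j"
    and "0 \<le> D" "0 \<le> \<eta>"
  shows "norm (\<Sum>i\<le>n. e i * v (n - i)) \<le> D * K * (real n + 1) * \<eta> ^ n"
proof -
  have "norm (e i * v (n - i)) \<le> D * K * \<eta> ^ n" if "i \<le> n" for i
  proof -
    have "norm (e i * v (n - i)) \<le> (D * \<eta> ^ i) * (K * \<eta> ^ (n - i))"
      using e[of i] v[of "n - i"] assms(3,4)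
      by (intro order.trans[OF norm_mult_ineq] mult_mono norm_ge_zero) simp_all
    also have "\<dots> = D * K * \<eta> ^ n" using that by (simp add: mult_ac flip: power_add)
    finally show ?thesis .
  qed
  then have "(\<Sum>i\<le>n. norm (e i * v (n - i))) \<le> (\<Sum>i\<le>n. D * K * \<eta> ^ n)"
    by (intro sum_mono) auto
  then have "norm (\<Sum>i\<le>n. e i * v (n - i)) \<le> (\<Sum>i\<le>n. D * K * \<eta> ^ n)"
    by (rule order.trans[OF norm_sum])
  then show ?thesis by (simp add: algebra_simps)
qed

lemma convolution_converges_exponentially:
  fixes e u :: "nat \<Rightarrow> complex"
  assumes e: "\<And>i. norm (e i) \<le> D * \<theta> ^ i" "0 < \<theta>" "\<theta> < 1"
    and u: "\<And>j. norm (u j - l) \<le> K * \<zeta> ^ j" "0 < \<zeta>" "\<zeta> < 1"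
  shows "\<exists>C \<eta>. 0 < \<eta> \<and> \<eta> < 1 \<and>
           (\<forall>n. norm ((\<Sum>i\<le>n. e i * u (n - i)) - l * suminf e) \<le> C * \<eta> ^ n)"
proof -
  define \<eta> where "\<eta> = max \<zeta> \<theta>"
  have \<eta>: "0 < \<eta>" "\<eta> < 1" "\<zeta> \<le> \<eta>" "\<theta> \<le> \<eta>" unfolding \<eta>_def using e u by auto
  have D: "0 \<le> D" and K: "0 \<le> K"
    using order.trans[OF norm_ge_zero e(1)[of 0]] order.trans[OF norm_ge_zero u(1)[of 0]] by simp_all
  have e': "norm (e i) \<le> D * \<eta> ^ i" for i
    using order.trans[OF e(1) mult_left_mono[OF power_mono D]] e(2) \<eta> by simp
  have u': "norm (u j - l) \<le> K * \<eta> ^ j" for j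
    using order.trans[OF u(1) mult_left_mono[OF power_mono K]] u(2) \<eta> by simp
  obtain C1 where C1: "\<And>n. real n * \<eta> ^ n \<le> C1 * ((1 + \<eta>) / 2) ^ n"
    using linear_times_geometric_le[OF \<eta>(1,2)] by blast
  define C where "C = D * K * (C1 + 1) + norm l * (D / (1 - \<theta>))"
  have "norm ((\<Sum>i\<le>n. e i * u (n - i)) - l * suminf e) \<le> C * ((1 + \<eta>) / 2) ^ n" for n
  proof -
    let ?\<eta> = "((1 + \<eta>) / 2) ^ n"
    have "\<eta> ^ n \<le> ?\<eta>" using \<eta> by (intro power_mono) auto
    then have "D * K * ((real n + 1) * \<eta> ^ n) \<le> D * K * ((C1 + 1) * ?\<eta>)"
      using C1[of n] D K by (intro mult_left_mono) (auto simp: algebra_simps)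
    then have first: "norm (\<Sum>i\<le>n. e i * (u (n - i) - l)) \<le> D * K * (C1 + 1) * ?\<eta>"
      using norm_convolution_geometric_le[OF e' u' D less_imp_le[OF \<eta>(1)], of n] by (simp add: mult_ac)
    have "norm (suminf e - (\<Sum>i<Suc n. e i)) \<le> D * \<theta> ^ Suc n / (1 - \<theta>)"
      using geometric_tail_le(2)[OF e(1) less_imp_le[OF e(2)] e(3)] .
    also have "\<dots> \<le> D / (1 - \<theta>) * ?\<eta>"
      using D e \<eta> \<open>\<eta> ^ n \<le> ?\<eta>\<close> by (intro geometric_tail_shift_le) auto
    finally have second: "norm (l * ((\<Sum>i\<le>n. e i) - suminf e)) \<le> norm l * (D / (1 - \<theta>) * ?\<eta>)"
      unfolding norm_mult by (intro mult_left_mono) (auto simp: lessThan_Suc_atMost norm_minus_commute)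
    have "(\<Sum>i\<le>n. e i * u (n - i)) - l * suminf e
        = (\<Sum>i\<le>n. e i * (u (n - i) - l)) + l * ((\<Sum>i\<le>n. e i) - suminf e)"
      by (simp add: algebra_simps sum_subtractf sum_distrib_left sum_distrib_right)
    then have "norm ((\<Sum>i\<le>n. e i * u (n - i)) - l * suminf e)
        \<le> D * K * (C1 + 1) * ?\<eta> + norm l * (D / (1 - \<theta>) * ?\<eta>)"
      using order.trans[OF norm_triangle_ineq add_mono[OF first second]] by simp
    also have "\<dots> = C * ?\<eta>" by (simp add: C_def algebra_simps)
    finally show ?thesis .
  qed
  then show ?thesis using \<eta> by (intro exI[of _ C] exI[of _ "(1 + \<eta>) / 2"]) auto
qed

locale exp_renewal =
  fixes a :: "nat \<Rightarrow> real" and C \<kappa> :: real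
  assumes a_nonneg: "0 \<le> a m"
    and a_sums: "a sums 1"
    and a0_pos: "0 < a 0"
    and a_le: "a m \<le> C * \<kappa> ^ m"
    and kappa_pos: "0 < \<kappa>"
    and kappa_less_1: "\<kappa> < 1"
begin

definition A :: "complex fps" where
  "A = Abs_fps (\<lambda>n. if n = 0 then 0 else of_real (a (n - 1)))"

definition tail :: "nat \<Rightarrow> real" where
  "tail n = 1 - (\<Sum>m<n. a m)"

definition B :: "complex fps" where
  "B = Abs_fps (\<lambda>n. of_real (tail n))"

lemma a_summable: "summable a"
  using a_sums by (rule sums_summable)

lemma tail_eq_suminf: "tail n = (\<Sum>m. a (m + n))"
  using suminf_split_initial_segment[OF a_summable, of n] a_sums
  unfolding tail_def by (simp add: sums_iff)

lemma tail_nonneg: "0 \<le> tail n"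
  unfolding tail_eq_suminf
  by (intro suminf_nonneg) (auto simp: summable_iff_shift a_summable a_nonneg)

lemma tail_le: "tail n \<le> C / (1 - \<kappa>) * \<kappa> ^ n"
proof -
  have geo: "summable (\<lambda>m. C * \<kappa> ^ (m + n))"
    using summable_mult[OF summable_geometric, of \<kappa> "C * \<kappa> ^ n"] kappa_pos kappa_less_1
    by (simp add: power_add mult_ac)
  have "tail n \<le> (\<Sum>m. C * \<kappa> ^ (m + n))"
    unfolding tail_eq_suminf
    by (intro suminf_le geo a_le) (simp add: summable_iff_shift a_summable)
  also have "\<dots> = C / (1 - \<kappa>) * \<kappa> ^ n"
    using suminf_mult[OF summable_geometric, of \<kappa> "C * \<kappa> ^ n"] kappa_pos kappa_less_1
    by (simp add: suminf_geometric power_add mult_ac)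
  finally show ?thesis .
qed

lemma tail_summable: "summable tail"
  using geometric_tail_le(1)[of tail "C / (1 - \<kappa>)" \<kappa>] tail_le tail_nonneg kappa_pos kappa_less_1
  by simp

lemma suminf_tail_pos: "0 < suminf tail"
proof -
  have "tail 0 \<le> suminf tail"
    using sum_le_suminf[OF tail_summable, of "{0}"] tail_nonneg by simp
  then show ?thesis by (simp add: tail_def)
qed

lemma A_conv_radius: "ereal (1 / \<kappa>) \<le> fps_conv_radius A"
proof (rule fps_conv_radius_ge_geometric[OF _ kappa_pos])
  fix n
  show "norm (fps_nth A n) \<le> (C / \<kappa>) * \<kappa> ^ n"
    using a_le[of "n - 1"] a_nonneg[of "n - 1"] kappa_pos
    by (cases n) (auto simp: A_def field_simps)
qed

lemma B_conv_radius: "ereal (1 / \<kappa>) \<le> fps_conv_radius B"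
proof (rule fps_conv_radius_ge_geometric[OF _ kappa_pos])
  fix n
  show "norm (fps_nth B n) \<le> C / (1 - \<kappa>) * \<kappa> ^ n"
    using tail_le[of n] tail_nonneg[of n] by (simp add: B_def)
qed

lemma in_conv_radius:
  fixes z :: complex
  shows "norm z < 1 / \<kappa> \<Longrightarrow> ereal (norm z) < fps_conv_radius A \<and> ereal (norm z) < fps_conv_radius B"
proof -
  assume "norm z < 1 / \<kappa>"
  then have "ereal (norm z) < ereal (1 / \<kappa>)" by simp
  then show ?thesis using A_conv_radius B_conv_radius by (meson order.strict_trans2)
qed

lemma norm_le_1_less_radius: "norm (z :: complex) \<le> 1 \<Longrightarrow> norm z < 1 / \<kappa>"
  using kappa_pos kappa_less_1 less_le_trans[of 1 "1 / \<kappa>" "norm z"] by fastforce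

lemma one_minus_X_times_B: "(1 - fps_X) * B = 1 - A"
proof (rule fps_ext)
  fix n
  show "fps_nth ((1 - fps_X) * B) n = fps_nth (1 - A) n"
  proof (cases n)
    case 0 then show ?thesis by (simp add: B_def A_def tail_def)
  next
    case (Suc m)
    have "(1 - fps_X) * B = B - fps_X * B" by (simp add: algebra_simps)
    then show ?thesis
      using Suc by (simp add: fps_X_mult_nth B_def A_def tail_def)
  qed
qed

lemma eval_one_minus_A:
  assumes "norm z < 1 / \<kappa>"
  shows "1 - eval_fps A z = (1 - z) * eval_fps B z"
proof -
  have radius: "fps_conv_radius (1 - fps_X :: complex fps) = \<infinity>"
    using fps_conv_radius_diff[of "1 :: complex fps" fps_X] by (simp add: top_unique)
  have "eval_fps (1 - A) z = eval_fps ((1 - fps_X) * B) z"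
    by (simp add: one_minus_X_times_B)
  then show ?thesis
    using in_conv_radius[OF assms] radius by (simp add: eval_fps_mult eval_fps_diff)
qed

text \<open>Aperiodicity: this is where \<open>a 0 > 0\<close> is needed.\<close>

lemma eval_A_neq_1:
  assumes "norm z \<le> 1" "z \<noteq> 1"
  shows "eval_fps A z \<noteq> 1"
proof
  assume A1: "eval_fps A z = 1"
  have "norm z < 1 / \<kappa>" using norm_le_1_less_radius assms(1) .
  then have "(\<lambda>n. fps_nth A n * z ^ n) sums 1"
    using sums_eval_fps in_conv_radius A1 by metis
  then have "(\<lambda>n. of_real (a n) * z ^ Suc n) sums 1"
    using sums_Suc_iff[of "\<lambda>n. fps_nth A n * z ^ n"] by (simp add: A_def)
  from sums_Re[OF this] have "(\<lambda>n. a n * Re (z ^ Suc n)) sums 1" by simp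
  from sums_diff[OF a_sums this]
  have sums0: "(\<lambda>n. a n * (1 - Re (z ^ Suc n))) sums 0" by (simp add: algebra_simps)
  have "Re (z ^ Suc n) \<le> 1" for n
  proof -
    have "norm z ^ Suc n \<le> 1" by (rule power_le_one[OF norm_ge_zero assms(1)])
    then show ?thesis using complex_Re_le_cmod[of "z ^ Suc n"] unfolding norm_power by linarith
  qed
  then have nonneg: "0 \<le> a n * (1 - Re (z ^ Suc n))" for n
    using a_nonneg by simp
  have "\<forall>n. a n * (1 - Re (z ^ Suc n)) = 0"
    using suminf_eq_zero_iff[OF sums_summable[OF sums0] nonneg] sums0 by (simp add: sums_iff)
  then have "a 0 * (1 - Re (z ^ Suc 0)) = 0" by blast
  then have Re: "Re z = 1" using a0_pos by simp
  have "(Re z)\<^sup>2 + (Im z)\<^sup>2 \<le> 1"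
    using assms(1) power_le_one[of "norm z" 2] by (simp add: cmod_power2)
  then have "Im z = 0" using Re by simp
  then show False using Re assms(2) by (simp add: complex_eq_iff)
qed

lemma eval_B_1: "eval_fps B 1 = of_real (suminf tail)"
proof -
  have "norm (1::complex) < 1 / \<kappa>" using kappa_pos kappa_less_1 by simp
  then have "(\<lambda>n. fps_nth B n * 1 ^ n) sums eval_fps B 1"
    using sums_eval_fps in_conv_radius by metis
  moreover have "(\<lambda>n. of_real (tail n) :: complex) sums of_real (suminf tail)"
    unfolding sums_of_real_iff using tail_summable by (rule summable_sums)
  ultimately show ?thesis by (simp add: B_def sums_unique2)
qed

lemma eval_B_nonzero_on_disc:
  assumes "norm z \<le> 1"
  shows "eval_fps B z \<noteq> 0"
proof (cases "z = 1")
  case True then show ?thesis using eval_B_1 suminf_tail_pos by simp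
next
  case False
  show ?thesis
    using eval_one_minus_A[OF norm_le_1_less_radius[OF assms]] eval_A_neq_1[OF assms False]
    by fastforce
qed

text \<open>The zero set of \<open>B\<close> in a closed disc of radius \<open>> 1\<close> is compact and misses the unit disc,
  so it keeps a positive distance from it.\<close>

lemma eval_B_nonzero_beyond_disc:
  "\<exists>\<rho>>1. \<rho> < 1 / \<kappa> \<and> (\<forall>z. norm z < \<rho> \<longrightarrow> eval_fps B z \<noteq> 0)"
proof -
  define R where "R = (1 + 1 / \<kappa>) / 2"
  have R: "1 < R" "R < 1 / \<kappa>"
    unfolding R_def using kappa_pos kappa_less_1 by (auto simp: field_simps)
  have "cball (0::complex) R \<subseteq> eball 0 (fps_conv_radius B)"
  proof
    fix z :: complex assume "z \<in> cball 0 R"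
    then have "norm z < 1 / \<kappa>" using R by simp
    then show "z \<in> eball 0 (fps_conv_radius B)" using in_conv_radius by simp
  qed
  then have cont: "continuous_on (cball 0 R) (eval_fps B)"
    by (rule continuous_on_subset[OF continuous_on_eval_fps])
  define Z where "Z = {z \<in> cball 0 R. eval_fps B z = 0}"
  have "closed Z"
    unfolding Z_def by (rule continuous_closed_preimage_constant[OF cont closed_cball])
  then have "compact Z"
    by (metis (no_types, lifting) Z_def compact_Int_closed compact_cball inf.absorb_iff2
        mem_Collect_eq subsetI)
  show ?thesis
  proof (cases "Z = {}")
    case True
    then show ?thesis using R unfolding Z_def by (intro exI[of _ R]) auto
  next
    case False
    obtain z0 where z0: "z0 \<in> Z" "\<And>y. y \<in> Z \<Longrightarrow> norm z0 \<le> norm y"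
      using continuous_attains_inf[OF \<open>compact Z\<close> False continuous_on_norm_id] by blast
    have "1 < norm z0"
      using z0(1) eval_B_nonzero_on_disc unfolding Z_def by force
    moreover have "eval_fps B z \<noteq> 0" if "norm z < min R (norm z0)" for z
      using z0(2)[of z] that unfolding Z_def by force
    ultimately show ?thesis
      using R by (intro exI[of _ "min R (norm z0)"]) auto
  qed
qed

definition renewal_limit :: real where
  "renewal_limit = inverse (suminf tail)"

lemma inverse_B_coeffs:
  "\<exists>K \<zeta>. 0 \<le> K \<and> 0 < \<zeta> \<and> \<zeta> < 1 \<and> (\<forall>n. norm (fps_nth (inverse B) n) \<le> K * \<zeta> ^ n)
     \<and> (\<lambda>n. fps_nth (inverse B) n) sums of_real renewal_limit"
proof -
  obtain \<rho> where \<rho>: "1 < \<rho>" "\<rho> < 1 / \<kappa>" "\<And>z. norm z < \<rho> \<Longrightarrow> eval_fps B z \<noteq> 0"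
    using eval_B_nonzero_beyond_disc by blast
  have "min (ereal \<rho>) (fps_conv_radius B) \<le> fps_conv_radius (inverse B)"
    using \<rho>(3) by (intro fps_conv_radius_inverse) auto
  moreover have "ereal \<rho> \<le> fps_conv_radius B"
    using B_conv_radius \<rho>(2) by (meson ereal_less_eq(3) less_imp_le order_trans)
  ultimately have radius: "ereal \<rho> \<le> fps_conv_radius (inverse B)" by simp
  define R where "R = (1 + \<rho>) / 2"
  have R: "1 < R" "R < \<rho>" unfolding R_def using \<rho> by auto
  have "summable (\<lambda>n. fps_nth (inverse B) n * of_real R ^ n)"
    using R radius unfolding fps_conv_radius_def
    by (intro summable_in_conv_radius) (simp add: less_le_trans[of "ereal R" "ereal \<rho>"])
  then obtain K where K: "0 < K" "\<And>n. norm (fps_nth (inverse B) n * of_real R ^ n) \<le> K"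
    by (meson BseqE summable_imp_Bseq)
  have bound: "norm (fps_nth (inverse B) n) \<le> K * (1 / R) ^ n" for n
    using K(2)[of n] R by (simp add: norm_mult norm_power field_simps power_one_over)
  have "ereal (norm (1::complex)) < fps_conv_radius (inverse B)"
    using \<rho> radius less_le_trans[of "ereal 1" "ereal \<rho>"] by simp
  then have "(\<lambda>n. fps_nth (inverse B) n * 1 ^ n) sums eval_fps (inverse B) 1"
    by (rule sums_eval_fps)
  moreover have "eval_fps (inverse B) 1 = inverse (eval_fps B 1)"
    using \<rho> in_conv_radius[OF norm_le_1_less_radius, of 1]
    by (intro eval_fps_inverse[where r = \<rho>]) auto
  ultimately have "(\<lambda>n. fps_nth (inverse B) n) sums of_real renewal_limit"
    by (simp add: eval_B_1 renewal_limit_def)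
  then show ?thesis
    using bound K(1) R by (intro exI[of _ K] exI[of _ "1 / R"]) auto
qed

lemma inverse_one_minus_A_nth:
  "fps_nth (inverse (1 - A)) n = (\<Sum>j\<le>n. fps_nth (inverse B) j)"
proof -
  have "inverse (1 - A) = inverse B * inverse (1 - fps_X)"
    by (simp flip: one_minus_X_times_B add: fps_inverse_mult mult.commute)
  also have "inverse (1 - fps_X) = (Abs_fps (\<lambda>n. 1) :: complex fps)"
    by (rule fps_inverse_one_minus_fps_X)
  finally show ?thesis by (simp add: fps_mult_nth atLeast0AtMost)
qed

lemma inverse_one_minus_A_converges:
  "\<exists>K \<zeta>. 0 < \<zeta> \<and> \<zeta> < 1 \<and>
     (\<forall>j. norm (fps_nth (inverse (1 - A)) j - of_real renewal_limit) \<le> K * \<zeta> ^ j)"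
proof -
  obtain K \<zeta> where K: "0 \<le> K" "0 < \<zeta>" "\<zeta> < 1" "\<And>n. norm (fps_nth (inverse B) n) \<le> K * \<zeta> ^ n"
    and sums: "(\<lambda>n. fps_nth (inverse B) n) sums of_real renewal_limit"
    using inverse_B_coeffs by blast
  have "norm (fps_nth (inverse (1 - A)) j - of_real renewal_limit) \<le> K / (1 - \<zeta>) * \<zeta> ^ j" for j
  proof -
    have "norm (suminf (fps_nth (inverse B)) - (\<Sum>i<Suc j. fps_nth (inverse B) i))
          \<le> K * \<zeta> ^ Suc j / (1 - \<zeta>)"
      using geometric_tail_le(2)[OF K(4) less_imp_le[OF K(2)] K(3)] .
    also have "\<dots> \<le> K / (1 - \<zeta>) * \<zeta> ^ j"
      using K by (intro geometric_tail_shift_le) auto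
    finally show ?thesis
      using sums unfolding inverse_one_minus_A_nth
      by (simp add: sums_iff lessThan_Suc_atMost norm_minus_commute)
  qed
  then show ?thesis using K by blast
qed

definition defect :: "(nat \<Rightarrow> real) \<Rightarrow> nat \<Rightarrow> real" where
  "defect q n = (if n = 0 then q 0 else q n - (\<Sum>m<n. a m * q (n - 1 - m)))"

lemma fps_times_one_minus_A:
  "Abs_fps (\<lambda>n. of_real (q n)) * (1 - A) = Abs_fps (\<lambda>n. of_real (defect q n))"
proof (rule fps_ext)
  fix n
  show "fps_nth (Abs_fps (\<lambda>n. of_real (q n)) * (1 - A)) n = fps_nth (Abs_fps (\<lambda>n. of_real (defect q n))) n"
  proof (cases n)
    case 0 then show ?thesis by (simp add: A_def defect_def)
  next
    case (Suc m)
    have "(\<Sum>i\<le>m. of_real (q i) * fps_nth (1 - A) (Suc m - i)) = - of_real (\<Sum>i\<le>m. a (m - i) * q i)"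
      by (simp add: A_def Suc_diff_le sum_negf mult.commute)
    also have "(\<Sum>i\<le>m. a (m - i) * q i) = (\<Sum>j<Suc m. a j * q (m - j))"
      using sum.atLeastAtMost_rev[of "\<lambda>i. a (m - i) * q i" 0 m]
      by (simp add: atLeast0AtMost lessThan_Suc_atMost)
    finally show ?thesis
      using Suc by (simp add: fps_mult_nth atLeast0AtMost defect_def A_def)
  qed
qed

lemma renewal_decomposition:
  "of_real (q n) = (\<Sum>i\<le>n. of_real (defect q i) * fps_nth (inverse (1 - A)) (n - i))"
proof -
  let ?Q = "Abs_fps (\<lambda>n. of_real (q n) :: complex)"
  have "(1 - A) * inverse (1 - A) = 1"
    by (rule inverse_mult_eq_1') (simp add: A_def)
  then have "?Q = ?Q * ((1 - A) * inverse (1 - A))" by simp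
  also have "\<dots> = Abs_fps (\<lambda>n. of_real (defect q n)) * inverse (1 - A)"
    by (simp only: mult.assoc[symmetric] fps_times_one_minus_A)
  finally have "fps_nth ?Q n = fps_nth (Abs_fps (\<lambda>n. of_real (defect q n)) * inverse (1 - A)) n"
    by (rule arg_cong)
  then show ?thesis by (simp add: fps_mult_nth atLeast0AtMost)
qed

theorem renewal_converges_exponentially:
  fixes q :: "nat \<Rightarrow> real"
  assumes defect_le: "\<And>n. 0 < n \<Longrightarrow> \<bar>q n - (\<Sum>m<n. a m * q (n - 1 - m))\<bar> \<le> D * \<theta> ^ n"
    and \<theta>: "0 < \<theta>" "\<theta> < 1"
  shows "\<exists>L C \<eta>. 0 < \<eta> \<and> \<eta> < 1 \<and> (\<forall>n. \<bar>q n - L\<bar> \<le> C * \<eta> ^ n)"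
proof -
  define e where "e n = (of_real (defect q n) :: complex)" for n
  have e_le: "norm (e n) \<le> max \<bar>q 0\<bar> D * \<theta> ^ n" for n
  proof (cases "n = 0")
    case True then show ?thesis unfolding e_def norm_of_real by (simp add: defect_def)
  next
    case False
    have "D * \<theta> ^ n \<le> max \<bar>q 0\<bar> D * \<theta> ^ n" using \<theta> by (intro mult_right_mono) auto
    then show ?thesis unfolding e_def norm_of_real using defect_le[of n] False by (simp add: defect_def)
  qed
  obtain K \<zeta> where U: "0 < \<zeta>" "\<zeta> < 1"
    "\<And>j. norm (fps_nth (inverse (1 - A)) j - of_real renewal_limit) \<le> K * \<zeta> ^ j"
    using inverse_one_minus_A_converges by blast
  obtain C \<eta> where \<eta>: "0 < \<eta>" "\<eta> < 1" and
    C: "\<And>n. norm ((\<Sum>i\<le>n. e i * fps_nth (inverse (1 - A)) (n - i)) - of_real renewal_limit * suminf e)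
           \<le> C * \<eta> ^ n"
    using convolution_converges_exponentially[OF e_le \<theta> U(3,1,2)] by blast
  have "\<bar>q n - Re (of_real renewal_limit * suminf e)\<bar> \<le> C * \<eta> ^ n" for n
    using abs_Re_le_cmod[of "of_real (q n) - of_real renewal_limit * suminf e"] C[of n]
    unfolding e_def renewal_decomposition[of q n, symmetric] by simp
  then show ?thesis using \<eta> by blast
qed

end

section \<open>Counting trees\<close>

lemma edges_append: "edges (Node (xs @ ys)) = edges (Node xs) + edges (Node ys)"
  by (induction xs) auto

lemma height_append: "height (Node (xs @ ys)) = max (height (Node xs)) (height (Node ys))"
  by (induction xs) (auto simp: max_def)

lemma height_le_edges: "height t \<le> edges t"
proof (induction t)
  case (Node ts)
  then show ?case
  proof (induction ts)
    case (Cons a ts)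
    then have "height a \<le> edges a" "height (Node ts) \<le> edges (Node ts)" by auto
    then show ?case by (simp add: max_def)
  qed simp
qed

lemma height_child_less: "x \<in> set ts \<Longrightarrow> Suc (height x) \<le> height (Node ts)"
  by (induction ts) auto

lemma edges_child_less: "x \<in> set ts \<Longrightarrow> Suc (edges x) \<le> edges (Node ts)"
  by (induction ts) auto

lemma exists_highest_child: "ts \<noteq> [] \<Longrightarrow> \<exists>x\<in>set ts. height (Node ts) = Suc (height x)"
proof (induction ts)
  case (Cons a ts)
  then show ?case by (cases "ts = []") (auto simp: max_def)
qed simp

definition trees_with_edges :: "nat \<Rightarrow> ptree set" where
  "trees_with_edges n = {t. edges t = n}"

fun cons_child :: "ptree \<Rightarrow> ptree \<Rightarrow> ptree" where
  "cons_child t (Node ts) = Node (t # ts)"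

lemma edges_cons_child: "edges (cons_child t s) = edges t + 1 + edges s"
  by (cases s) auto

lemma inj_cons_child: "inj (\<lambda>(t, s). cons_child t s)"
proof (rule injI)
  fix a b :: "ptree \<times> ptree"
  assume "(\<lambda>(t, s). cons_child t s) a = (\<lambda>(t, s). cons_child t s) b"
  then show "a = b"
    by (cases a; cases b) (metis cons_child.simps ptree.exhaust ptree.inject list.inject old.prod.case)
qed

lemma trees_with_edges_0: "trees_with_edges 0 = {Node []}"
proof -
  have "edges t = 0 \<longleftrightarrow> t = Node []" for t by (cases t) auto
  then show ?thesis unfolding trees_with_edges_def by auto
qed

lemma trees_with_edges_Suc:
  "trees_with_edges (Suc n) =
     (\<lambda>(t, s). cons_child t s) ` (\<Union>i\<le>n. trees_with_edges i \<times> trees_with_edges (n - i))"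
proof (intro equalityI subsetI)
  fix u assume "u \<in> trees_with_edges (Suc n)"
  then obtain us where u: "u = Node us" and e: "edges (Node us) = Suc n"
    unfolding trees_with_edges_def by (cases u) auto
  then obtain t ts where us: "us = t # ts" by (cases us) auto
  then have u: "u = Node (t # ts)" and e: "edges t + edges (Node ts) = n"
    using u e by auto
  then have "(t, Node ts) \<in> (\<Union>i\<le>n. trees_with_edges i \<times> trees_with_edges (n - i))"
    unfolding trees_with_edges_def by (intro UN_I[of "edges t"]) auto
  then show "u \<in> (\<lambda>(t, s). cons_child t s) ` (\<Union>i\<le>n. trees_with_edges i \<times> trees_with_edges (n - i))"
    using u by force
qed (auto simp: trees_with_edges_def edges_cons_child)

lemma finite_trees_with_edges: "finite (trees_with_edges n)"
proof (induction n rule: less_induct)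
  case (less n)
  then show ?case
    by (cases n) (auto simp: trees_with_edges_0 trees_with_edges_Suc intro!: finite_UN_I)
qed

lemma card_trees_with_edges_Suc:
  "card (trees_with_edges (Suc n)) =
     (\<Sum>i\<le>n. card (trees_with_edges i) * card (trees_with_edges (n - i)))"
proof -
  have "card (trees_with_edges (Suc n)) = card (\<Union>i\<le>n. trees_with_edges i \<times> trees_with_edges (n - i))"
    unfolding trees_with_edges_Suc by (intro card_image inj_on_subset[OF inj_cons_child]) simp
  also have "\<dots> = (\<Sum>i\<le>n. card (trees_with_edges i \<times> trees_with_edges (n - i)))"
    by (intro card_UN_disjoint)
      (auto simp: finite_trees_with_edges[unfolded trees_with_edges_def] trees_with_edges_def)
  finally show ?thesis by (simp add: card_cartesian_product)
qed

definition tree_count_fps :: "real fps" where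
  "tree_count_fps = Abs_fps (\<lambda>n. real (card (trees_with_edges n)))"

lemma tree_count_fps_eq: "tree_count_fps = 1 + fps_X * tree_count_fps ^ 2"
proof (rule fps_ext)
  fix n
  show "fps_nth tree_count_fps n = fps_nth (1 + fps_X * tree_count_fps ^ 2) n"
  proof (cases n)
    case 0 then show ?thesis by (simp add: tree_count_fps_def trees_with_edges_0)
  next
    case (Suc m)
    have "fps_nth (1 + fps_X * tree_count_fps ^ 2) n = fps_nth (tree_count_fps * tree_count_fps) m"
      using Suc by (simp add: fps_X_mult_nth power2_eq_square)
    then show ?thesis
      using Suc by (simp add: fps_mult_nth tree_count_fps_def card_trees_with_edges_Suc atLeast0AtMost)
  qed
qed

lemma tree_count_fps_ode:
  "fps_X * (1 - 4 * fps_X) * fps_deriv tree_count_fps = 2 * fps_X * tree_count_fps - tree_count_fps + 1"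
proof -
  define C where "C = tree_count_fps"
  define D where "D = fps_deriv tree_count_fps"
  define X where "X = (fps_X :: real fps)"
  have XC2: "X * C ^ 2 = C - 1"
    unfolding C_def X_def by (metis tree_count_fps_eq add_diff_cancel_left')
  have "D = fps_deriv (1 + X * C ^ 2)" unfolding D_def C_def X_def by (simp flip: tree_count_fps_eq)
  then have "D = C ^ 2 + X * (2 * C * D)"
    unfolding X_def C_def D_def by (simp add: fps_deriv_power algebra_simps power2_eq_square)
  then have D: "D * (1 - 2 * X * C) = C ^ 2" by (simp add: algebra_simps)
  have "(1 - 2 * X * C) ^ 2 = 1 - 4 * X * C + 4 * X * (X * C ^ 2)"
    by (simp add: algebra_simps power2_eq_square)
  also have "\<dots> = 1 - 4 * X" unfolding XC2 by (simp add: algebra_simps)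
  finally have sq: "(1 - 2 * X * C) ^ 2 = 1 - 4 * X" .
  have "D * (1 - 4 * X) = D * (1 - 2 * X * C) * (1 - 2 * X * C)"
    unfolding sq[symmetric] by (simp add: power2_eq_square algebra_simps)
  also have "\<dots> = C ^ 2 - 2 * C * (X * C ^ 2)"
    unfolding D by (simp add: algebra_simps power2_eq_square)
  also have "\<dots> = 2 * C - C ^ 2" unfolding XC2 by (simp add: algebra_simps power2_eq_square)
  finally have e: "D * (1 - 4 * X) = 2 * C - C ^ 2" .
  have "X * (1 - 4 * X) * D = X * (D * (1 - 4 * X))" by (simp add: algebra_simps)
  also have "\<dots> = 2 * X * C - X * C ^ 2" unfolding e by (simp add: algebra_simps)
  also have "\<dots> = 2 * X * C - C + 1" unfolding XC2 by simp
  finally show ?thesis unfolding X_def C_def D_def .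
qed

lemma card_trees_with_edges_recurrence:
  "real (n + 2) * card (trees_with_edges (Suc n)) = real (4 * n + 2) * card (trees_with_edges n)"
proof -
  let ?c = "\<lambda>n. real (card (trees_with_edges n))"
  let ?L = "fps_X * (1 - 4 * fps_X) * fps_deriv tree_count_fps"
  have "?L = fps_X * fps_deriv tree_count_fps - 4 * (fps_X ^ 2 * fps_deriv tree_count_fps)"
    by (simp add: algebra_simps power2_eq_square)
  moreover have "fps_nth (fps_X ^ 2 * fps_deriv tree_count_fps) (Suc n) = real n * ?c n"
    by (cases n) (auto simp: fps_X_power_mult_nth tree_count_fps_def)
  ultimately have "fps_nth ?L (Suc n) = real (Suc n) * ?c (Suc n) - 4 * real n * ?c n"
    by (simp add: fps_X_mult_nth tree_count_fps_def)
  moreover have "fps_nth (2 * fps_X * tree_count_fps - tree_count_fps + 1) (Suc n) = 2 * ?c n - ?c (Suc n)"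
    by (simp add: fps_X_mult_nth tree_count_fps_def mult.assoc)
  ultimately have "real (Suc n) * ?c (Suc n) - 4 * real n * ?c n = 2 * ?c n - ?c (Suc n)"
    using tree_count_fps_ode by metis
  then show ?thesis by (simp add: algebra_simps)
qed

lemma catalan_recurrence: "real (n + 2) * catalan (Suc n) = real (4 * n + 2) * catalan n"
proof -
  define x where "x = real n"
  define F where "F = (fact (2 * n) :: real)"
  define f where "f = (fact n :: real)"
  have "f \<noteq> 0" "x + 1 \<noteq> 0" "x + 2 \<noteq> 0" unfolding f_def x_def by auto
  have "real (n + 2) * catalan (Suc n)
      = (x + 2) * ((2 * x + 2) * (2 * x + 1) * F / (((x + 1) * f) * ((x + 2) * ((x + 1) * f))))"
    unfolding catalan_def F_def f_def x_def by (simp add: fact_Suc algebra_simps)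
  also have "\<dots> = ((2 * x + 2) * (2 * x + 1) * F) / ((x + 1) * f * ((x + 1) * f))"
    using \<open>f \<noteq> 0\<close> \<open>x + 1 \<noteq> 0\<close> \<open>x + 2 \<noteq> 0\<close> by (simp add: divide_simps)
  also have "\<dots> = (4 * x + 2) * (F / (f * ((x + 1) * f)))"
    using \<open>f \<noteq> 0\<close> \<open>x + 1 \<noteq> 0\<close> by (simp add: divide_simps) (simp add: algebra_simps)
  also have "\<dots> = real (4 * n + 2) * catalan n"
    unfolding catalan_def F_def f_def x_def by (simp add: fact_Suc algebra_simps)
  finally show ?thesis .
qed

lemma card_trees_with_edges: "real (card (trees_with_edges n)) = catalan n"
proof (induction n)
  case 0 then show ?case by (simp add: trees_with_edges_0 catalan_def)
next
  case (Suc n)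
  then have "real (n + 2) * card (trees_with_edges (Suc n)) = real (n + 2) * catalan (Suc n)"
    using card_trees_with_edges_recurrence catalan_recurrence by simp
  then show ?case by (simp del: of_nat_add)
qed

lemma catalan_0: "catalan 0 = 1"
  by (simp add: catalan_def)

lemma catalan_Suc: "catalan (Suc n) = (\<Sum>i\<le>n. catalan i * catalan (n - i))"
  using card_trees_with_edges_Suc[of n] by (simp flip: card_trees_with_edges)

lemma catalan_nonneg: "0 \<le> catalan n"
  by (simp flip: card_trees_with_edges)

definition catalan_poly :: "nat \<Rightarrow> real \<Rightarrow> real" where
  "catalan_poly N x = (\<Sum>n\<le>N. catalan n * x ^ n)"

lemma catalan_poly_nonneg: "0 \<le> x \<Longrightarrow> 0 \<le> catalan_poly N x"
  unfolding catalan_poly_def by (auto intro!: sum_nonneg mult_nonneg_nonneg catalan_nonneg)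

lemma catalan_poly_Suc:
  "catalan_poly (Suc N) x = 1 + x * (\<Sum>(i, j)\<in>{(i, j). i + j \<le> N}. (catalan i * x ^ i) * (catalan j * x ^ j))"
proof -
  have "catalan_poly (Suc N) x = 1 + x * (\<Sum>n\<le>N. \<Sum>i\<le>n. (catalan i * x ^ i) * (catalan (n - i) * x ^ (n - i)))"
    unfolding catalan_poly_def sum.atMost_Suc_shift catalan_0 catalan_Suc
    by (auto simp: algebra_simps sum_distrib_left sum_distrib_right simp flip: power_add
        intro!: sum.cong)
  then show ?thesis by (simp add: sum.triangle_reindex_eq)
qed

lemma catalan_poly_square:
  "(catalan_poly N x)\<^sup>2 = (\<Sum>(i, j)\<in>{..N} \<times> {..N}. (catalan i * x ^ i) * (catalan j * x ^ j))"
  unfolding catalan_poly_def power2_eq_square sum_product sum.cartesian_product by simp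

lemma catalan_poly_Suc_le:
  assumes "0 \<le> x" shows "catalan_poly (Suc N) x \<le> 1 + x * (catalan_poly N x)\<^sup>2"
proof -
  have "(\<Sum>(i, j)\<in>{(i, j). i + j \<le> N}. (catalan i * x ^ i) * (catalan j * x ^ j))
        \<le> (\<Sum>(i, j)\<in>{..N} \<times> {..N}. (catalan i * x ^ i) * (catalan j * x ^ j))"
    using assms by (intro sum_mono2) (auto intro!: mult_nonneg_nonneg catalan_nonneg)
  then show ?thesis unfolding catalan_poly_Suc catalan_poly_square
    using assms by (intro add_left_mono mult_left_mono) auto
qed

lemma catalan_poly_square_le:
  assumes "0 \<le> x" shows "1 + x * (catalan_poly N x)\<^sup>2 \<le> catalan_poly (Suc (2 * N)) x"
proof -
  have "finite {(i, j). i + j \<le> 2 * N}"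
    by (rule finite_subset[of _ "{..2 * N} \<times> {..2 * N}"]) auto
  then have "(\<Sum>(i, j)\<in>{..N} \<times> {..N}. (catalan i * x ^ i) * (catalan j * x ^ j))
        \<le> (\<Sum>(i, j)\<in>{(i, j). i + j \<le> 2 * N}. (catalan i * x ^ i) * (catalan j * x ^ j))"
    using assms by (intro sum_mono2) (auto intro!: mult_nonneg_nonneg catalan_nonneg)
  then show ?thesis unfolding catalan_poly_Suc catalan_poly_square
    using assms by (intro add_left_mono mult_left_mono) auto
qed

lemma catalan_poly_le_fixed_point:
  assumes "0 \<le> x" "0 \<le> r" "1 + x * r\<^sup>2 = r"
  shows "catalan_poly N x \<le> r"
proof (induction N)
  case 0
  have "1 \<le> r" using assms by (metis le_add_same_cancel1 mult_nonneg_nonneg zero_le_power2)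
  then show ?case by (simp add: catalan_poly_def catalan_0)
next
  case (Suc N)
  have "(catalan_poly N x)\<^sup>2 \<le> r\<^sup>2"
    using Suc catalan_poly_nonneg[OF assms(1)] by (intro power_mono) auto
  then have "1 + x * (catalan_poly N x)\<^sup>2 \<le> 1 + x * r\<^sup>2"
    using assms by (intro add_left_mono mult_left_mono) auto
  then show ?case using catalan_poly_Suc_le[OF assms(1), of N] assms(3) by simp
qed

lemma catalan_le: "catalan n \<le> 2 * 4 ^ n"
proof -
  have "catalan n * (1 / 4) ^ n \<le> catalan_poly n (1 / 4)"
    unfolding catalan_poly_def by (rule member_le_sum) (auto intro!: mult_nonneg_nonneg catalan_nonneg)
  also have "\<dots> \<le> 2" by (rule catalan_poly_le_fixed_point) auto
  finally show ?thesis by (simp add: field_simps power_divide)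
qed

lemma catalan_gf_bounds:
  assumes x: "0 \<le> x" and r: "0 \<le> r" "1 + x * r\<^sup>2 = r"
  shows "summable (\<lambda>n. catalan n * x ^ n)" "(\<Sum>n. catalan n * x ^ n) \<le> r"
    "1 + x * (\<Sum>n. catalan n * x ^ n)\<^sup>2 \<le> (\<Sum>n. catalan n * x ^ n)"
proof -
  have nonneg: "0 \<le> catalan n * x ^ n" for n using x by (simp add: catalan_nonneg)
  have partial: "(\<Sum>n<N. catalan n * x ^ n) \<le> r" for N
    using catalan_poly_le_fixed_point[OF x r, of "N - 1"] r(1)
    by (cases N) (simp_all add: catalan_poly_def lessThan_Suc_atMost)
  show summable: "summable (\<lambda>n. catalan n * x ^ n)"
    by (rule summableI_nonneg_bounded[OF nonneg partial])
  show "(\<Sum>n. catalan n * x ^ n) \<le> r" by (rule suminf_le_const[OF summable partial])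
  have "catalan_poly (Suc (2 * N)) x \<le> (\<Sum>n. catalan n * x ^ n)" for N
    unfolding catalan_poly_def using sum_le_suminf[OF summable, of "{..Suc (2 * N)}"] nonneg by auto
  then have "1 + x * (catalan_poly N x)\<^sup>2 \<le> (\<Sum>n. catalan n * x ^ n)" for N
    using order.trans[OF catalan_poly_square_le[OF x]] by blast
  moreover have "(\<lambda>N. 1 + x * (catalan_poly N x)\<^sup>2) \<longlonglongrightarrow> 1 + x * (\<Sum>n. catalan n * x ^ n)\<^sup>2"
    unfolding catalan_poly_def by (intro tendsto_intros summable_LIMSEQ'[OF summable])
  ultimately show "1 + x * (\<Sum>n. catalan n * x ^ n)\<^sup>2 \<le> (\<Sum>n. catalan n * x ^ n)"
    by (intro LIMSEQ_le_const2) auto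
qed

text \<open>At \<open>x = k / (1 + k)\<^sup>2\<close> the fixed points are \<open>(1 + k) / k\<close> and \<open>1 + k\<close>, and
  \<open>1 + x F\<^sup>2 \<le> F\<close> forces \<open>F\<close> to lie between them.\<close>

lemma catalan_sums_critical:
  fixes k g :: real
  assumes k: "1 < k" and g: "g = k / (1 + k)\<^sup>2"
  shows "(\<lambda>n. catalan n * g ^ n) sums ((1 + k) / k)"
proof -
  define r where "r = (1 + k) / k"
  define F where "F = (\<Sum>n. catalan n * g ^ n)"
  have kp: "0 < k" and g0: "0 < g" using k g by auto
  have s1: "g * (r + (1 + k)) = 1" and s2: "g * (r * (1 + k)) = 1"
    unfolding g r_def using kp by (simp_all add: divide_simps) (simp_all add: algebra_simps power2_eq_square)
  have factor: "g * y\<^sup>2 - y + 1 = g * (y - r) * (y - (1 + k))" for y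
  proof -
    have "g * (y - r) * (y - (1 + k)) = g * y\<^sup>2 - y * (g * (r + (1 + k))) + g * (r * (1 + k))"
      by (simp add: algebra_simps power2_eq_square)
    then show ?thesis unfolding s1 s2 by simp
  qed
  have "1 + g * r\<^sup>2 = r" using factor[of r] by simp
  moreover have "0 \<le> r" unfolding r_def using kp by simp
  ultimately have summable: "summable (\<lambda>n. catalan n * g ^ n)" and "F \<le> r" "1 + g * F\<^sup>2 \<le> F"
    using catalan_gf_bounds[of g r] g0 unfolding F_def by auto
  then have le0: "g * (F - r) * (F - (1 + k)) \<le> 0" using factor[of F] by simp
  have "r < 1 + k"
    unfolding r_def using kp less_1_mult[OF k k] by (simp add: divide_less_eq algebra_simps)
  have "F = r"
  proof (rule ccontr)
    assume "F \<noteq> r"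
    with \<open>F \<le> r\<close> \<open>r < 1 + k\<close> have "0 < (F - r) * (F - (1 + k))" by (intro mult_neg_neg) auto
    then have "0 < g * ((F - r) * (F - (1 + k)))" using g0 by (rule mult_pos_pos[rotated])
    then show False using le0 by (simp add: mult.assoc)
  qed
  then show ?thesis using summable unfolding F_def r_def by (metis summable_sums)
qed

section \<open>Removing the highest subtree\<close>

text \<open>A tree \<open>p\<close> with at least one edge encodes a position among siblings: the children of its
  first child are the siblings to the left, its remaining children those to the right.\<close>

fun plug :: "ptree \<Rightarrow> ptree \<Rightarrow> ptree" where
  "plug (Node (Node L # R)) x = Node (L @ [x] @ R)"
| "plug (Node []) x = Node [x]"

lemma edges_pos_imp_marked: "1 \<le> edges p \<Longrightarrow> \<exists>L R. p = Node (Node L # R)"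
  by (cases "(p, Node [])" rule: plug.cases) auto

lemma edges_plug: "1 \<le> edges p \<Longrightarrow> edges (plug p x) = edges p + edges x"
  using edges_pos_imp_marked[of p] by (auto simp: edges_append)

lemma sibling_height_less:
  assumes "edges (Node (Node L # R)) = Suc m" "l \<in> set (L @ R)"
  shows "height l < m"
proof -
  have "edges (Node (L @ R)) = m" using assms(1) by (simp add: edges_append)
  then have "Suc (edges l) \<le> m" using edges_child_less[OF assms(2)] by simp
  then show ?thesis using height_le_edges[of l] by simp
qed

lemma height_plug_tall:
  assumes "edges p = Suc m" "m \<le> height x"
  shows "height (plug p x) = Suc (height x)"
proof -
  obtain L R where p: "p = Node (Node L # R)" using assms(1) edges_pos_imp_marked[of p] by auto
  have "edges (Node L) + edges (Node R) \<le> m" using assms(1) p by simp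
  then have "height (Node L) \<le> m" "height (Node R) \<le> m"
    using height_le_edges[of "Node L"] height_le_edges[of "Node R"] by auto
  moreover have "height (Node (L @ [x] @ R)) = max (height (Node L)) (max (Suc (height x)) (height (Node R)))"
    by (simp only: height_append append_Cons append_Nil) simp
  ultimately show ?thesis using assms(2) p by simp
qed

lemma nth_append_Cons_other:
  assumes "i < length (L @ x # R)" "i \<noteq> length L"
  shows "(L @ x # R) ! i \<in> set (L @ R)"
proof (cases "i < length L")
  case True then show ?thesis by (simp add: nth_append)
next
  case False
  with assms(2) have less: "length L < i" by simp
  then have "i - length L = Suc (i - Suc (length L))" by simp
  then have "(L @ x # R) ! i = R ! (i - Suc (length L))" using less by (simp add: nth_append)
  moreover have "i - Suc (length L) < length R" using assms(1) less by simp
  ultimately show ?thesis by simp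
qed

text \<open>The siblings in \<open>p\<close> have height \<open>< m\<close>, so the plugged tree is the unique tallest child.\<close>

lemma plug_inj_tall:
  assumes "edges p = Suc m" "m \<le> height x" "edges p' = Suc m'" "m' \<le> height x'"
    and "plug p x = plug p' x'"
  shows "p = p' \<and> x = x'"
proof -
  obtain L R where p: "p = Node (Node L # R)" using assms(1) edges_pos_imp_marked[of p] by auto
  obtain L' R' where p': "p' = Node (Node L' # R')" using assms(3) edges_pos_imp_marked[of p'] by auto
  have eq: "L @ x # R = L' @ x' # R'" using assms(5) unfolding p p' by simp
  show ?thesis
  proof (cases "length L = length L'")
    case True
    then show ?thesis using eq unfolding p p' by auto
  next
    case False
    have "x' = (L @ x # R) ! length L'" unfolding eq by simp
    moreover have "x = (L' @ x' # R') ! length L" unfolding eq[symmetric] by simp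
    moreover have "length L' < length (L @ x # R)" "length L < length (L' @ x' # R')"
      using arg_cong[OF eq, of length] by auto
    ultimately have "x' \<in> set (L @ R)" "x \<in> set (L' @ R')"
      using False nth_append_Cons_other[of "length L'" L x R] nth_append_Cons_other[of "length L" L' x' R']
      by auto
    then have "height x' < m" "height x < m'"
      using sibling_height_less assms(1,3) unfolding p p' by blast+
    then show ?thesis using assms(2,4) by simp
  qed
qed

lemma trees_with_edges_subset_plug_highest:
  assumes "1 \<le> n"
  shows "trees_with_edges n \<subseteq> (\<lambda>(p, x). plug p x) `
           {(p, x). 1 \<le> edges p \<and> edges p + edges x = n \<and> height (plug p x) = Suc (height x)}"
proof
  fix t assume t: "t \<in> trees_with_edges n"
  obtain ts where tt: "t = Node ts" by (cases t)
  have "ts \<noteq> []" using t assms tt unfolding trees_with_edges_def by auto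
  then obtain x where x: "x \<in> set ts" "height (Node ts) = Suc (height x)"
    using exists_highest_child by blast
  then obtain L R where ts: "ts = L @ x # R" by (meson split_list)
  define p where "p = Node (Node L # R)"
  have c: "plug p x = t" unfolding p_def tt ts by simp
  have "1 \<le> edges p" unfolding p_def by simp
  moreover have "edges p + edges x = n"
    using edges_plug[OF \<open>1 \<le> edges p\<close>, of x] c t unfolding trees_with_edges_def by simp
  ultimately show "t \<in> (\<lambda>(p, x). plug p x) `
           {(p, x). 1 \<le> edges p \<and> edges p + edges x = n \<and> height (plug p x) = Suc (height x)}"
    using c x tt by (intro image_eqI[of _ _ "(p, x)"]) auto
qed

definition height_sum :: "real \<Rightarrow> nat \<Rightarrow> real" where
  "height_sum k n = (\<Sum>t\<in>trees_with_edges n. k ^ height t)"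

lemma edge_pairs_eq:
  "{(p, x). 1 \<le> edges p \<and> edges p + edges x = n} =
     (\<Union>m<n. trees_with_edges (Suc m) \<times> trees_with_edges (n - 1 - m))"
proof (intro equalityI subsetI)
  fix z assume "z \<in> {(p, x). 1 \<le> edges p \<and> edges p + edges x = n}"
  then obtain p x where "z = (p, x)" "1 \<le> edges p" "edges p + edges x = n" by auto
  then show "z \<in> (\<Union>m<n. trees_with_edges (Suc m) \<times> trees_with_edges (n - 1 - m))"
    unfolding trees_with_edges_def by (intro UN_I[of "edges p - 1"]) auto
qed (auto simp: trees_with_edges_def)

lemma sum_edge_pairs:
  fixes f :: "ptree \<Rightarrow> real"
  assumes "\<And>m. m < n \<Longrightarrow> X m \<subseteq> trees_with_edges (n - 1 - m)"
  shows "(\<Sum>(p, x)\<in>(\<Union>m<n. trees_with_edges (Suc m) \<times> X m). f x)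
           = (\<Sum>m<n. catalan (Suc m) * (\<Sum>x\<in>X m. f x))"
proof -
  have fin: "finite (X m)" if "m < n" for m
    using assms[OF that] finite_trees_with_edges finite_subset by blast
  have "(\<Sum>(p, x)\<in>(\<Union>m<n. trees_with_edges (Suc m) \<times> X m). f x)
      = (\<Sum>m<n. \<Sum>(p, x)\<in>trees_with_edges (Suc m) \<times> X m. f x)"
    using fin finite_trees_with_edges
    by (intro sum.UNION_disjoint) (auto simp: trees_with_edges_def)
  also have "\<dots> = (\<Sum>m<n. catalan (Suc m) * (\<Sum>x\<in>X m. f x))"
    by (intro sum.cong refl) (simp add: sum.cartesian_product[symmetric] flip: card_trees_with_edges)
  finally show ?thesis .
qed

lemma height_sum_le_convolution:
  assumes "1 \<le> n" "0 \<le> k"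
  shows "height_sum k n \<le> (\<Sum>m<n. catalan (Suc m) * (k * height_sum k (n - 1 - m)))"
proof -
  let ?D = "{(p, x). 1 \<le> edges p \<and> edges p + edges x = n \<and> height (plug p x) = Suc (height x)}"
  let ?E = "{(p, x). 1 \<le> edges p \<and> edges p + edges x = n}"
  have finE: "finite ?E" unfolding edge_pairs_eq using finite_trees_with_edges by auto
  have finD: "finite ?D" by (rule finite_subset[OF _ finE]) auto
  have "height_sum k n \<le> (\<Sum>t\<in>(\<lambda>(p, x). plug p x) ` ?D. k ^ height t)"
    unfolding height_sum_def using trees_with_edges_subset_plug_highest[OF assms(1)] finD assms(2)
    by (intro sum_mono2) auto
  also have "\<dots> \<le> (\<Sum>(p, x)\<in>?D. k ^ height (plug p x))"
    using sum_image_le[OF finD, of "\<lambda>t. k ^ height t" "\<lambda>(p, x). plug p x"] assms(2)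
    by (simp add: case_prod_unfold)
  also have "\<dots> = (\<Sum>(p, x)\<in>?D. k * k ^ height x)"
    by (intro sum.cong) auto
  also have "\<dots> \<le> (\<Sum>(p, x)\<in>?E. k * k ^ height x)"
    using finE assms(2) by (intro sum_mono2) auto
  also have "\<dots> = (\<Sum>m<n. catalan (Suc m) * (\<Sum>x\<in>trees_with_edges (n - 1 - m). k * k ^ height x))"
    unfolding edge_pairs_eq by (rule sum_edge_pairs) auto
  also have "\<dots> = (\<Sum>m<n. catalan (Suc m) * (k * height_sum k (n - 1 - m)))"
    by (simp add: height_sum_def sum_distrib_left)
  finally show ?thesis .
qed

text \<open>Conversely, plugging trees of height at least \<open>m\<close> into trees with \<open>m + 1\<close> edges is
  injective; \<open>X\<close> selects the plugged trees and \<open>P\<close> is any property of the results.\<close>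

lemma height_sum_ge_convolution:
  assumes "0 \<le> k"
    and X: "\<And>m. m < n \<Longrightarrow> X m \<subseteq> {x\<in>trees_with_edges (n - 1 - m). m \<le> height x}"
    and P: "\<And>m p x. m < n \<Longrightarrow> p \<in> trees_with_edges (Suc m) \<Longrightarrow> x \<in> X m \<Longrightarrow> P (plug p x)"
  shows "(\<Sum>m<n. catalan (Suc m) * (k * (\<Sum>x\<in>X m. k ^ height x)))
         \<le> (\<Sum>t\<in>{t\<in>trees_with_edges n. P t}. k ^ height t)"
proof -
  let ?D = "\<Union>m<n. trees_with_edges (Suc m) \<times> X m"
  have X': "X m \<subseteq> trees_with_edges (n - 1 - m)" if "m < n" for m using X[OF that] by auto
  have finD: "finite ?D"
    using finite_subset[OF X' finite_trees_with_edges] finite_trees_with_edges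
    by (intro finite_UN_I finite_cartesian_product) auto
  have height: "height (plug p x) = Suc (height x)" if "(p, x) \<in> ?D" for p x
    using that X height_plug_tall unfolding trees_with_edges_def by fastforce
  have inj: "inj_on (\<lambda>(p, x). plug p x) ?D"
  proof (rule inj_onI)
    fix a b assume a: "a \<in> ?D" and b: "b \<in> ?D" and e: "(\<lambda>(p, x). plug p x) a = (\<lambda>(p, x). plug p x) b"
    obtain p x p' x' where ab: "a = (p, x)" "b = (p', x')" by (cases a; cases b)
    obtain m where m: "m < n" "p \<in> trees_with_edges (Suc m)" "x \<in> X m" using a ab by auto
    obtain m' where m': "m' < n" "p' \<in> trees_with_edges (Suc m')" "x' \<in> X m'" using b ab by auto
    show "a = b"
      using plug_inj_tall[of p m x p' m' x'] m m' X[OF m(1)] X[OF m'(1)] e ab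
      unfolding trees_with_edges_def by auto
  qed
  have image: "(\<lambda>(p, x). plug p x) ` ?D \<subseteq> {t\<in>trees_with_edges n. P t}"
  proof
    fix t assume "t \<in> (\<lambda>(p, x). plug p x) ` ?D"
    then obtain m p x where m: "m < n" "p \<in> trees_with_edges (Suc m)" "x \<in> X m" and t: "t = plug p x"
      by auto
    have "edges t = n" using edges_plug[of p x] m X'[OF m(1)] t unfolding trees_with_edges_def by auto
    then show "t \<in> {t\<in>trees_with_edges n. P t}" using P[OF m] t unfolding trees_with_edges_def by auto
  qed
  have "(\<Sum>m<n. catalan (Suc m) * (k * (\<Sum>x\<in>X m. k ^ height x))) = (\<Sum>(p, x)\<in>?D. k * k ^ height x)"
    by (subst sum_edge_pairs[OF X']) (auto simp: sum_distrib_left)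
  also have "\<dots> = (\<Sum>(p, x)\<in>?D. k ^ height (plug p x))"
  proof (intro sum.cong refl)
    fix z assume "z \<in> ?D"
    then show "(case z of (p, x) \<Rightarrow> k * k ^ height x) = (case z of (p, x) \<Rightarrow> k ^ height (plug p x))"
      using height by (cases z) simp
  qed
  also have "\<dots> = (\<Sum>t\<in>(\<lambda>(p, x). plug p x) ` ?D. k ^ height t)"
    using sum.reindex[OF inj, of "\<lambda>t. k ^ height t"] by (simp add: case_prod_unfold)
  also have "\<dots> \<le> (\<Sum>t\<in>{t\<in>trees_with_edges n. P t}. k ^ height t)"
    using image assms(1) finite_trees_with_edges by (intro sum_mono2) auto
  finally show ?thesis .
qed

section \<open>Convergence of the height-weighted tree sums\<close>

lemma min_1_le_powr:
  fixes y t :: real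
  assumes "0 < y" "0 \<le> t" "t \<le> 1"
  shows "min 1 y \<le> y powr t"
proof (cases "y \<le> 1")
  case True
  then have "y powr 1 \<le> y powr t" using assms by (intro powr_mono') auto
  then show ?thesis using assms by simp
next
  case False
  then show ?thesis using ge_one_powr_ge_zero[of y t] assms by simp
qed

lemma power_powr_commute: "0 < (x::real) \<Longrightarrow> (x ^ m) powr t = (x powr t) ^ m"
  by (simp add: powr_realpow[symmetric] powr_powr mult.commute)

text \<open>Summing the hypothesis against \<open>x\<^sup>n\<close> gives \<open>S \<ge> (\<Sum>m\<le>J. w m * x ^ Suc m) * S\<close> for the
  positive and finite \<open>S = (\<Sum>n. \<phi> n * x ^ n)\<close>.\<close>

lemma supercritical_convolution_not_small:
  fixes \<phi> w :: "nat \<Rightarrow> real"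
  assumes \<phi>: "\<And>n. 0 \<le> \<phi> n" "0 < \<phi> n0"
    and w: "\<And>m. 0 \<le> w m"
    and super: "\<And>n. (\<Sum>m<n. if m \<le> J then w m * \<phi> (n - 1 - m) else 0) \<le> \<phi> n"
    and x: "0 < x" "1 < (\<Sum>m\<le>J. w m * x ^ Suc m)"
    and small: "\<And>n. \<phi> n * x ^ n \<le> C * \<theta> ^ n" "0 \<le> \<theta>" "\<theta> < 1"
  shows False
proof -
  have summable: "summable (\<lambda>n. \<phi> n * x ^ n)"
    using small \<phi> x by (intro summable_comparison_test'[OF summable_mult[OF summable_geometric]]) auto
  define S where "S = (\<Sum>n. \<phi> n * x ^ n)"
  have "\<phi> n0 * x ^ n0 \<le> S"
    unfolding S_def using sum_le_suminf[OF summable, of "{n0}"] \<phi> x by auto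
  then have "0 < S" using \<phi>(2) x by (smt (verit) zero_less_mult_iff zero_less_power)
  define T where "T m n = (if m < n then w m * \<phi> (n - 1 - m) * x ^ n else 0)" for m n
  have T_sums: "T m sums (w m * x ^ Suc m * S)" for m
  proof -
    have "(\<lambda>n. (w m * x ^ Suc m) * (\<phi> n * x ^ n)) sums ((w m * x ^ Suc m) * S)"
      unfolding S_def using summable by (intro sums_mult summable_sums)
    moreover have "(\<lambda>n. T m (n + Suc m)) = (\<lambda>n. (w m * x ^ Suc m) * (\<phi> n * x ^ n))"
      unfolding T_def by (auto simp: power_add mult_ac)
    ultimately show ?thesis using sums_iff_shift[of "T m" "Suc m"] by (simp add: T_def)
  qed
  have le_n: "(\<Sum>m\<le>J. T m n) \<le> \<phi> n * x ^ n" for n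
  proof -
    have "(\<Sum>m\<le>J. T m n) = (\<Sum>m<n. if m \<le> J then w m * \<phi> (n - 1 - m) else 0) * x ^ n"
      unfolding T_def sum_distrib_right
      by (rule sum.mono_neutral_cong) (auto simp: finite_lessThan)
    also have "\<dots> \<le> \<phi> n * x ^ n" using super[of n] x by (intro mult_right_mono) auto
    finally show ?thesis .
  qed
  have sums_J: "(\<lambda>n. \<Sum>m\<le>J. T m n) sums (\<Sum>m\<le>J. w m * x ^ Suc m * S)"
    by (rule sums_sum) (rule T_sums)
  have "(\<Sum>m\<le>J. w m * x ^ Suc m * S) \<le> S"
    using sums_le[OF le_n sums_J summable_sums[OF summable]] unfolding S_def .
  then have "(\<Sum>m\<le>J. w m * x ^ Suc m) * S \<le> 1 * S" by (simp add: sum_distrib_right)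
  then show False using x(2) \<open>0 < S\<close> by (simp add: mult_le_cancel_right)
qed

lemma small_exponent_exists:
  fixes k l :: real
  assumes k: "1 < k" and l: "0 < l" "l < 1"
  shows "\<exists>t. 0 < t \<and> t \<le> 1 \<and> l * k powr t < 1 \<and> l powr t < 1"
proof -
  have lnk: "0 < ln k" and lnl: "ln l < 0" using k l by auto
  define t where "t = min 1 (ln (1 / l) / (2 * ln k))"
  have t: "0 < t" "t \<le> 1" unfolding t_def using lnk lnl by (auto simp: ln_div divide_neg_pos)
  have "l * k powr t \<le> l * k powr (ln (1 / l) / (2 * ln k))"
    using k l unfolding t_def by (intro mult_left_mono powr_mono) auto
  also have "\<dots> = exp (ln l / 2)"
    using k l lnk by (simp add: powr_def ln_div exp_diff exp_minus field_simps flip: exp_add)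
  also have "\<dots> < 1" using lnl by simp
  finally have "l * k powr t < 1" .
  moreover have "t * ln l < 0" using t lnl by (simp add: mult_pos_neg)
  then have "l powr t < 1" using l by (simp add: powr_def)
  ultimately show ?thesis using t by blast
qed

text \<open>Interpolate \<open>min 1 y \<le> y\<^sup>t\<close> with an exponent \<open>t\<close> so small that \<open>l k\<^sup>t < 1\<close>.\<close>

lemma convolution_min_decay:
  fixes k l c :: real and w :: "nat \<Rightarrow> real"
  assumes k: "1 < k" and l: "0 < l" "l < 1"
    and w: "\<And>m. 0 \<le> w m" "\<And>m. w m \<le> c * l ^ m"
  shows "\<exists>C \<theta>. 0 < \<theta> \<and> \<theta> < 1 \<and>
           (\<forall>n. (\<Sum>m<n. w m * min 1 (2 * k ^ m * l ^ (n - 1 - m))) \<le> C * \<theta> ^ n)"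
proof -
  obtain t where t: "0 < t" "t \<le> 1" and lk: "l * k powr t < 1" and lt: "l powr t < 1"
    using small_exponent_exists[OF k l] by blast
  define \<eta> where "\<eta> = max (l * k powr t) (l powr t)"
  have \<eta>: "0 < \<eta>" "\<eta> < 1" unfolding \<eta>_def using lk lt l by (auto simp: less_max_iff_disj)
  have c: "0 \<le> c" using w(1)[of 0] w(2)[of 0] by simp
  have k0: "0 < k" using k by simp
  have term_le: "w m * min 1 (2 * k ^ m * l ^ (n - 1 - m)) \<le> 2 * c * \<eta> ^ (n - 1)" if "m < n" for m n
  proof -
    have "min 1 (2 * k ^ m * l ^ (n - 1 - m)) \<le> (2 * k ^ m * l ^ (n - 1 - m)) powr t"
      using k l t by (intro min_1_le_powr) auto
    also have "\<dots> = 2 powr t * (k powr t) ^ m * (l powr t) ^ (n - 1 - m)"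
      using k l by (simp add: powr_mult power_powr_commute)
    also have "\<dots> \<le> 2 * (k powr t) ^ m * (l powr t) ^ (n - 1 - m)"
      using t powr_mono[of t 1 2] by (intro mult_right_mono) auto
    finally have "w m * min 1 (2 * k ^ m * l ^ (n - 1 - m))
        \<le> (c * l ^ m) * (2 * (k powr t) ^ m * (l powr t) ^ (n - 1 - m))"
      using w c l k0 by (intro mult_mono) auto
    also have "\<dots> = 2 * c * ((l * k powr t) ^ m * (l powr t) ^ (n - 1 - m))"
      by (simp add: power_mult_distrib mult_ac)
    also have "\<dots> \<le> 2 * c * (\<eta> ^ m * \<eta> ^ (n - 1 - m))"
      unfolding \<eta>_def using c l k \<eta>(1)[unfolded \<eta>_def] by (intro mult_left_mono mult_mono power_mono) auto
    also have "\<eta> ^ m * \<eta> ^ (n - 1 - m) = \<eta> ^ (n - 1)"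
      using that by (simp flip: power_add)
    finally show ?thesis .
  qed
  obtain C1 where C1: "\<And>n. real n * \<eta> ^ n \<le> C1 * ((1 + \<eta>) / 2) ^ n"
    using linear_times_geometric_le[OF \<eta>] by blast
  have "(\<Sum>m<n. w m * min 1 (2 * k ^ m * l ^ (n - 1 - m))) \<le> (2 * c / \<eta> * C1) * ((1 + \<eta>) / 2) ^ n" for n
  proof (cases n)
    case 0
    then show ?thesis using C1[of 0] c \<eta> by simp
  next
    case (Suc n')
    have "(\<Sum>m<n. w m * min 1 (2 * k ^ m * l ^ (n - 1 - m))) \<le> (\<Sum>m<n. 2 * c * \<eta> ^ (n - 1))"
      by (intro sum_mono term_le) simp
    also have "\<dots> = 2 * c / \<eta> * (real n * \<eta> ^ n)" using Suc \<eta> by (simp add: field_simps)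
    also have "\<dots> \<le> 2 * c / \<eta> * (C1 * ((1 + \<eta>) / 2) ^ n)"
      using C1[of n] c \<eta> by (intro mult_left_mono) auto
    finally show ?thesis by simp
  qed
  then show ?thesis using \<eta> by (intro exI[of _ "2 * c / \<eta> * C1"] exI[of _ "(1 + \<eta>) / 2"]) auto
qed

fun path_tree :: "nat \<Rightarrow> ptree" where
  "path_tree 0 = Node []"
| "path_tree (Suc n) = Node [path_tree n]"

lemma edges_path_tree: "edges (path_tree n) = n"
  by (induction n) auto

lemma height_path_tree: "height (path_tree n) = n"
  by (induction n) auto

locale critical_trees =
  fixes k g :: real
  assumes k_gt_1: "1 < k" and g_eq: "g = k / (1 + k)\<^sup>2"
begin

lemma k_pos: "0 < k" using k_gt_1 by simp

lemma g_pos: "0 < g" using k_pos g_eq by simp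

lemma four_g_less_1: "4 * g < 1"
proof -
  have "0 < (k - 1)\<^sup>2" using k_gt_1 by simp
  then have "4 * k < (1 + k)\<^sup>2" by (simp add: power2_eq_square algebra_simps)
  then show ?thesis unfolding g_eq using k_pos by (simp add: field_simps)
qed

definition weight :: "nat \<Rightarrow> real" where
  "weight m = k * catalan (Suc m) * g ^ Suc m"

lemma weight_nonneg: "0 \<le> weight m"
  unfolding weight_def using k_pos g_pos by (simp add: catalan_nonneg)

lemma weight_0: "weight 0 = k * g"
  unfolding weight_def by (simp add: catalan_Suc catalan_0)

lemma weight_sums: "weight sums 1"
proof -
  have "(\<lambda>n. catalan (Suc n) * g ^ Suc n) sums ((1 + k) / k - catalan 0 * g ^ 0)"
    using catalan_sums_critical[OF k_gt_1 g_eq] sums_Suc_iff[of "\<lambda>n. catalan n * g ^ n"] by simp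
  then have "(\<lambda>n. catalan (Suc n) * g ^ Suc n) sums (1 / k)"
    using k_pos by (simp add: catalan_0 field_simps)
  from sums_mult[OF this, of k] show ?thesis
    unfolding weight_def using k_pos by (simp add: mult.assoc)
qed

lemma weight_le: "weight m \<le> 8 * k * g * (4 * g) ^ m"
proof -
  have "weight m \<le> k * (2 * 4 ^ Suc m * g ^ Suc m)"
    unfolding weight_def using k_pos g_pos catalan_le[of "Suc m"]
    by (simp add: mult.assoc mult_right_mono)
  also have "\<dots> = 8 * k * g * (4 * g) ^ m" by (simp add: power_mult_distrib)
  finally show ?thesis .
qed

sublocale exp_renewal weight "8 * k * g" "4 * g"
  using weight_nonneg weight_sums weight_0 weight_le k_pos g_pos four_g_less_1
  by unfold_locales auto

definition q :: "nat \<Rightarrow> real" where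
  "q n = g ^ n * height_sum k n"

definition q_tall :: "nat \<Rightarrow> nat \<Rightarrow> real" where
  "q_tall j n = g ^ n * (\<Sum>t\<in>{t\<in>trees_with_edges n. j \<le> height t}. k ^ height t)"

lemma q_0: "q 0 = 1"
  unfolding q_def height_sum_def by (simp add: trees_with_edges_0)

lemma q_tall_nonneg: "0 \<le> q_tall j n"
  unfolding q_tall_def using g_pos k_pos by (intro mult_nonneg_nonneg sum_nonneg) auto

lemma q_nonneg: "0 \<le> q n"
  unfolding q_def height_sum_def using g_pos k_pos by (intro mult_nonneg_nonneg sum_nonneg) auto

lemma q_tall_le_q: "q_tall j n \<le> q n"
  unfolding q_tall_def q_def height_sum_def using g_pos k_pos finite_trees_with_edges
  by (intro mult_left_mono sum_mono2) auto

lemma power_g_split: "m < n \<Longrightarrow> g ^ n = g ^ Suc m * g ^ (n - 1 - m)"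
proof -
  assume "m < n"
  then have "n = Suc m + (n - 1 - m)" by simp
  then show ?thesis by (metis power_add)
qed

lemma q_le_convolution: "1 \<le> n \<Longrightarrow> q n \<le> (\<Sum>m<n. weight m * q (n - 1 - m))"
proof -
  assume n: "1 \<le> n"
  have "q n \<le> g ^ n * (\<Sum>m<n. catalan (Suc m) * (k * height_sum k (n - 1 - m)))"
    unfolding q_def using height_sum_le_convolution[OF n] k_pos g_pos by (intro mult_left_mono) auto
  also have "\<dots> = (\<Sum>m<n. weight m * q (n - 1 - m))"
    unfolding sum_distrib_left
    by (intro sum.cong refl) (simp add: weight_def q_def power_g_split mult_ac)
  finally show ?thesis .
qed

lemma q_le_1: "q n \<le> 1"
proof (induction n rule: less_induct)
  case (less n)
  show ?case
  proof (cases n)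
    case 0 then show ?thesis by (simp add: q_0)
  next
    case (Suc n')
    have "q n \<le> (\<Sum>m<n. weight m * q (n - 1 - m))" using Suc by (intro q_le_convolution) simp
    also have "\<dots> \<le> (\<Sum>m<n. weight m)"
      using less Suc weight_nonneg q_nonneg by (intro sum_mono mult_right_le_one_le) auto
    also have "\<dots> \<le> 1"
      using sum_le_suminf[OF sums_summable[OF weight_sums], of "{..<n}"] weight_nonneg weight_sums
      by (auto simp: sums_iff)
    finally show ?thesis .
  qed
qed

lemma q_minus_q_tall_le: "q n - q_tall j n \<le> 2 * k ^ j * (4 * g) ^ n"
proof -
  let ?low = "{t\<in>trees_with_edges n. \<not> j \<le> height t}"
  have "height_sum k n = (\<Sum>t\<in>{t\<in>trees_with_edges n. j \<le> height t}. k ^ height t) + (\<Sum>t\<in>?low. k ^ height t)"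
    unfolding height_sum_def using finite_trees_with_edges
    by (subst sum.union_disjoint[symmetric]) (auto intro: sum.cong)
  moreover have "(\<Sum>t\<in>?low. k ^ height t) \<le> (\<Sum>t\<in>trees_with_edges n. k ^ j)"
    using k_gt_1 k_pos finite_trees_with_edges
    by (intro order.trans[OF sum_mono sum_mono2]) (auto intro: power_increasing)
  ultimately have "q n - q_tall j n \<le> g ^ n * (catalan n * k ^ j)"
    unfolding q_def q_tall_def using g_pos by (simp add: algebra_simps flip: card_trees_with_edges)
  also have "\<dots> \<le> g ^ n * (2 * 4 ^ n * k ^ j)"
    using g_pos k_pos catalan_le[of n] by (intro mult_left_mono mult_right_mono) auto
  also have "\<dots> = 2 * k ^ j * (4 * g) ^ n" by (simp add: power_mult_distrib algebra_simps)
  finally show ?thesis .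
qed

lemma q_tall_ge_convolution:
  "(\<Sum>m<n. if m \<le> J then weight m * q_tall J (n - 1 - m) else 0) \<le> q_tall J n"
proof -
  define X where "X m = (if m \<le> J then {x\<in>trees_with_edges (n - 1 - m). J \<le> height x} else {})" for m
  have "(\<Sum>m<n. catalan (Suc m) * (k * (\<Sum>x\<in>X m. k ^ height x)))
         \<le> (\<Sum>t\<in>{t\<in>trees_with_edges n. J \<le> height t}. k ^ height t)"
  proof (rule height_sum_ge_convolution)
    show "J \<le> height (plug p x)" if "m < n" "p \<in> trees_with_edges (Suc m)" "x \<in> X m" for m p x
      using that height_plug_tall[of p m x] unfolding X_def trees_with_edges_def
      by (auto split: if_splits)
  qed (use k_pos in \<open>auto simp: X_def\<close>)
  then have "g ^ n * (\<Sum>m<n. catalan (Suc m) * (k * (\<Sum>x\<in>X m. k ^ height x))) \<le> q_tall J n"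
    unfolding q_tall_def using g_pos by (intro mult_left_mono) auto
  moreover have "g ^ n * (\<Sum>m<n. catalan (Suc m) * (k * (\<Sum>x\<in>X m. k ^ height x)))
     = (\<Sum>m<n. if m \<le> J then weight m * q_tall J (n - 1 - m) else 0)"
    unfolding sum_distrib_left
    by (intro sum.cong refl) (simp add: weight_def q_tall_def power_g_split X_def sum_distrib_left mult_ac)
  ultimately show ?thesis by simp
qed

lemma q_ge_convolution: "(\<Sum>m<n. weight m * q_tall m (n - 1 - m)) \<le> q n"
proof -
  define X where "X m = {x\<in>trees_with_edges (n - 1 - m). m \<le> height x}" for m
  have "(\<Sum>m<n. catalan (Suc m) * (k * (\<Sum>x\<in>X m. k ^ height x)))
         \<le> (\<Sum>t\<in>{t\<in>trees_with_edges n. True}. k ^ height t)"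
    using k_pos unfolding X_def by (intro height_sum_ge_convolution) auto
  then have "g ^ n * (\<Sum>m<n. catalan (Suc m) * (k * (\<Sum>x\<in>X m. k ^ height x))) \<le> q n"
    unfolding q_def height_sum_def using g_pos by (intro mult_left_mono) auto
  moreover have "g ^ n * (\<Sum>m<n. catalan (Suc m) * (k * (\<Sum>x\<in>X m. k ^ height x)))
     = (\<Sum>m<n. weight m * q_tall m (n - 1 - m))"
    unfolding sum_distrib_left
    by (intro sum.cong refl) (simp add: weight_def q_tall_def power_g_split X_def sum_distrib_left mult_ac)
  ultimately show ?thesis by simp
qed

lemma convolution_minus_q_le:
  "(\<Sum>m<n. weight m * q (n - 1 - m)) - q n
     \<le> (\<Sum>m<n. weight m * min 1 (2 * k ^ m * (4 * g) ^ (n - 1 - m)))"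
proof -
  have "(\<Sum>m<n. weight m * q (n - 1 - m)) - q n
      \<le> (\<Sum>m<n. weight m * (q (n - 1 - m) - q_tall m (n - 1 - m)))"
    using q_ge_convolution[of n] by (simp add: sum_subtractf algebra_simps)
  also have "\<dots> \<le> (\<Sum>m<n. weight m * min 1 (2 * k ^ m * (4 * g) ^ (n - 1 - m)))"
    using q_le_1 q_tall_nonneg q_minus_q_tall_le
    by (intro sum_mono mult_left_mono weight_nonneg) (smt (verit))
  finally show ?thesis .
qed

lemma q_converges:
  "\<exists>L C \<theta>. 0 < \<theta> \<and> \<theta> < 1 \<and> (\<forall>n. \<bar>q n - L\<bar> \<le> C * \<theta> ^ n)"
proof -
  obtain D \<theta> where \<theta>: "0 < \<theta>" "\<theta> < 1" and
    D: "\<And>n. (\<Sum>m<n. weight m * min 1 (2 * k ^ m * (4 * g) ^ (n - 1 - m))) \<le> D * \<theta> ^ n"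
    using convolution_min_decay[OF k_gt_1 _ four_g_less_1 weight_nonneg weight_le] g_pos by auto
  have "\<bar>q n - (\<Sum>m<n. weight m * q (n - 1 - m))\<bar> \<le> D * \<theta> ^ n" if "0 < n" for n
    using q_le_convolution[of n] convolution_minus_q_le[of n] D[of n] that by simp
  then show ?thesis by (rule renewal_converges_exponentially[OF _ \<theta>])
qed

lemma height_sum_pos: "0 < height_sum k n"
proof -
  have "k ^ height (path_tree n) \<le> height_sum k n"
    unfolding height_sum_def using finite_trees_with_edges k_pos
    by (intro member_le_sum) (auto simp: trees_with_edges_def edges_path_tree)
  then show ?thesis using less_le_trans[OF zero_less_power[OF k_pos]] by blast
qed

lemma q_tall_diagonal_pos: "0 < q_tall J J"
proof -
  have "k ^ height (path_tree J) \<le> (\<Sum>t\<in>{t\<in>trees_with_edges J. J \<le> height t}. k ^ height t)"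
    using finite_trees_with_edges k_pos
    by (intro member_le_sum) (auto simp: trees_with_edges_def edges_path_tree height_path_tree)
  then have "0 < (\<Sum>t\<in>{t\<in>trees_with_edges J. J \<le> height t}. k ^ height t)"
    using less_le_trans[OF zero_less_power[OF k_pos]] by blast
  then show ?thesis unfolding q_tall_def using g_pos by simp
qed

text \<open>If the limit were \<open>0\<close>, the trees of height at least \<open>J\<close> would have to decay
  exponentially, which \<open>q_tall_ge_convolution\<close> forbids once the weights up to \<open>J\<close>
  carry almost all of the mass \<open>1\<close>.\<close>

lemma q_limit_pos:
  assumes "0 < \<theta>" "\<theta> < 1" "\<And>n. \<bar>q n - L\<bar> \<le> C * \<theta> ^ n"
  shows "0 < L"
proof -
  have "(\<lambda>n. C * \<theta> ^ n) \<longlonglongrightarrow> 0"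
    using assms by (intro tendsto_mult_right_zero LIMSEQ_power_zero) auto
  then have "(\<lambda>n. q n - L) \<longlonglongrightarrow> 0"
    by (rule Lim_null_comparison[rotated]) (use assms in auto)
  then have "q \<longlonglongrightarrow> L" by (simp add: LIM_zero_iff)
  then have "0 \<le> L" using q_nonneg by (intro LIMSEQ_le_const) auto
  moreover have "L \<noteq> 0"
  proof
    assume "L = 0"
    define x where "x = 2 / (1 + \<theta>)"
    have x: "1 < x" "0 \<le> x * \<theta>" "x * \<theta> < 1" unfolding x_def using assms by (auto simp: field_simps)
    have "(\<lambda>N. \<Sum>m<N. weight m) \<longlonglongrightarrow> 1" using weight_sums by (simp add: sums_def)
    moreover have "1 / x < 1" using x by simp
    ultimately have "\<forall>\<^sub>F N in sequentially. 1 / x < (\<Sum>m<N. weight m)" by (rule order_tendstoD(1))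
    then obtain J where J: "1 / x < (\<Sum>m<J. weight m)" by (auto simp: eventually_sequentially)
    have "1 < x * (\<Sum>m<J. weight m)" using J x by (simp add: field_simps)
    also have "\<dots> \<le> x * (\<Sum>m\<le>J. weight m)"
      using x weight_nonneg by (intro mult_left_mono sum_mono2) auto
    also have "\<dots> \<le> (\<Sum>m\<le>J. weight m * x ^ Suc m)"
      unfolding sum_distrib_left
    proof (intro sum_mono)
      fix m
      have "weight m * 1 \<le> weight m * x ^ m"
        using x weight_nonneg[of m] by (intro mult_left_mono one_le_power) auto
      then have "x * (weight m * 1) \<le> x * (weight m * x ^ m)" using x by (simp add: mult_left_mono)
      then show "x * weight m \<le> weight m * x ^ Suc m" by (simp add: mult_ac)
    qed
    finally have mass: "1 < (\<Sum>m\<le>J. weight m * x ^ Suc m)" .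
    have small: "q_tall J n * x ^ n \<le> C * (x * \<theta>) ^ n" for n
      using q_tall_le_q[of J n] assms(3)[of n] \<open>L = 0\<close> q_nonneg[of n] x
      by (simp add: power_mult_distrib mult_ac mult_right_mono)
    show False
      using supercritical_convolution_not_small[OF q_tall_nonneg q_tall_diagonal_pos weight_nonneg
          q_tall_ge_convolution _ mass small x(2,3)] x by simp
  qed
  ultimately show ?thesis by simp
qed

end

section \<open>Grafting onto the top level\<close>

text \<open>\<open>graft n F t\<close> replaces the \<open>i\<close>-th vertex of height \<open>n\<close> of \<open>t\<close>, counted from the left,
  by the tree \<open>F i\<close>.\<close>

fun graft :: "nat \<Rightarrow> (nat \<Rightarrow> ptree) \<Rightarrow> ptree \<Rightarrow> ptree"
and graftl :: "nat \<Rightarrow> (nat \<Rightarrow> ptree) \<Rightarrow> ptree list \<Rightarrow> ptree list" where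
  "graft 0 F t = F 0"
| "graft (Suc n) F (Node ts) = Node (graftl n F ts)"
| "graftl n F [] = []"
| "graftl n F (t # ts) = graft n F t # graftl n (\<lambda>i. F (i + level_count n t)) ts"

lemma length_graftl: "length (graftl n F ts) = length ts"
  by (induction ts arbitrary: F) auto

lemma sum_list_level_count_0: "sum_list (map (level_count 0) xs) = length xs"
  by (induction xs) auto

lemma level_count_1_graft: "level_count 1 (graft (Suc n) F t) = level_count 1 t"
  by (cases t) (simp add: length_graftl sum_list_level_count_0)

lemma truncate_graft: "truncate n (graft n F t) = truncate n t"
proof (induction t arbitrary: n F)
  case (Node ts)
  show ?case
  proof (cases n)
    case 0 then show ?thesis by simp
  next
    case (Suc m)
    have "map (truncate m) (graftl m F ts) = map (truncate m) ts" for F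
      using Node.IH by (induction ts arbitrary: F) auto
    then show ?thesis using Suc by simp
  qed
qed

lemma truncate_height: "height t \<le> n \<Longrightarrow> truncate n t = t"
proof (induction t arbitrary: n)
  case (Node ts)
  show ?case
  proof (cases n)
    case 0 then show ?thesis using Node.prems by (cases ts) auto
  next
    case (Suc m)
    have "\<forall>x\<in>set ts. height x \<le> m" using Node.prems Suc height_child_less by fastforce
    then have "map (truncate m) ts = ts" using Node.IH by (induction ts) auto
    then show ?thesis using Suc by simp
  qed
qed

lemma sum_lessThan_add: "(\<Sum>i<m + n. f i) = (\<Sum>i<m. f i) + (\<Sum>i<n. f (i + m))" for f :: "nat \<Rightarrow> 'a::comm_monoid_add"
  by (induction n) (auto simp: add_ac)

lemma edges_graft: "edges (graft n F t) = edges (truncate n t) + (\<Sum>i<level_count n t. edges (F i))"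
proof (induction t arbitrary: n F)
  case (Node ts)
  show ?case
  proof (cases n)
    case 0 then show ?thesis by simp
  next
    case (Suc m)
    have "edges (Node (graftl m F ts)) = edges (Node (map (truncate m) ts)) + (\<Sum>i<sum_list (map (level_count m) ts). edges (F i))" for F
      using Node.IH
    proof (induction ts arbitrary: F)
      case Nil then show ?case by simp
    next
      case (Cons t ts)
      have ih1: "edges (graft m F t) = edges (truncate m t) + (\<Sum>i<level_count m t. edges (F i))"
        using Cons.prems by simp
      have ih2: "edges (Node (graftl m (\<lambda>i. F (i + level_count m t)) ts)) =
          edges (Node (map (truncate m) ts)) + (\<Sum>i<sum_list (map (level_count m) ts). edges (F (i + level_count m t)))"
        using Cons by simp
      show ?case using ih1 ih2 by (simp add: sum_lessThan_add)
    qed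
    then show ?thesis using Suc by simp
  qed
qed

lemma height_graft_ge: "i < level_count n t \<Longrightarrow> n + height (F i) \<le> height (graft n F t)"
proof (induction t arbitrary: n F i)
  case (Node ts)
  show ?case
  proof (cases n)
    case 0 then show ?thesis using Node.prems by simp
  next
    case (Suc m)
    have "i < sum_list (map (level_count m) ts) \<Longrightarrow> Suc (m + height (F i)) \<le> height (Node (graftl m F ts))" for F i
      using Node.IH
    proof (induction ts arbitrary: F i)
      case Nil then show ?case by simp
    next
      case (Cons t ts)
      show ?case
      proof (cases "i < level_count m t")
        case True
        then have "m + height (F i) \<le> height (graft m F t)" using Cons.prems(2) by simp
        then show ?thesis by simp
      next
        case False
        let ?F = "\<lambda>j. F (j + level_count m t)"
        have "i - level_count m t < sum_list (map (level_count m) ts)" using Cons.prems(1) False by simp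
        then have "Suc (m + height (?F (i - level_count m t))) \<le> height (Node (graftl m ?F ts))"
          using Cons by simp
        then show ?thesis using False by simp
      qed
    qed
    then show ?thesis using Node.prems Suc by simp
  qed
qed

lemma graft_inj: "graft n F t = graft n F' t \<Longrightarrow> i < level_count n t \<Longrightarrow> F i = F' i"
proof (induction t arbitrary: n F F' i)
  case (Node ts)
  show ?case
  proof (cases n)
    case 0 then show ?thesis using Node.prems by simp
  next
    case (Suc m)
    have "graftl m F ts = graftl m F' ts \<Longrightarrow> i < sum_list (map (level_count m) ts) \<Longrightarrow> F i = F' i" for F F' i
      using Node.IH
    proof (induction ts arbitrary: F F' i)
      case Nil then show ?case by simp
    next
      case (Cons t ts)
      have h1: "graft m F t = graft m F' t" and
           h2: "graftl m (\<lambda>j. F (j + level_count m t)) ts = graftl m (\<lambda>j. F' (j + level_count m t)) ts"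
        using Cons.prems(1) by auto
      show ?case
      proof (cases "i < level_count m t")
        case True then show ?thesis using Cons.prems(3)[of t m F F' i] h1 by simp
      next
        case False
        have "i - level_count m t < sum_list (map (level_count m) ts)" using Cons.prems(2) False by simp
        have ih: "F i = F' i" if "x \<in> set ts" "graft n F x = graft n F' x" "i < level_count n x" for x n F F' i
          using Cons.prems(3)[of x n F F' i] that by auto
        have "(\<lambda>j. F (j + level_count m t)) (i - level_count m t) = (\<lambda>j. F' (j + level_count m t)) (i - level_count m t)"
          by (rule Cons.IH[OF h2 \<open>i - level_count m t < _\<close>]) (blast intro: ih)
        then show ?thesis using False by simp
      qed
    qed
    then show ?thesis using Node.prems Suc by simp
  qed
qed

lemma planted_iff: "planted T \<longleftrightarrow> (\<exists>t. T = Node [t])"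
  by (cases T) (auto simp: planted_def sum_list_level_count_0 length_Suc_conv)

lemma trees_of_size_0: "trees_of_size 0 = {}"
  unfolding trees_of_size_def planted_iff by auto

lemma trees_of_size_Suc: "trees_of_size (Suc n) = (\<lambda>t. Node [t]) ` trees_with_edges n"
  unfolding trees_of_size_def planted_iff trees_with_edges_def by auto

lemma finite_trees_of_size: "finite (trees_of_size N)"
  by (cases N) (simp_all add: trees_of_size_0 trees_of_size_Suc finite_trees_with_edges)

lemma level_height_pos: "1 \<le> level_count (height t) t"
proof (induction t)
  case (Node ts)
  show ?case
  proof (cases "ts = []")
    case True then show ?thesis by simp
  next
    case False
    then obtain x where x: "x \<in> set ts" "height (Node ts) = Suc (height x)" using exists_highest_child by blast
    have "1 \<le> level_count (height x) x" using Node.IH x(1) by simp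
    also have "\<dots> \<le> sum_list (map (level_count (height x)) ts)"
      using x(1) by (intro member_le_sum_list) auto
    finally show ?thesis using x(2) by simp
  qed
qed

lemma level_le_edges: "level_count (Suc m) t \<le> edges t"
proof (induction t arbitrary: m)
  case (Node ts)
  have "level_count m c \<le> edges c + 1" if "c \<in> set ts" for c
  proof (cases m)
    case 0 then show ?thesis by simp
  next
    case (Suc m') then show ?thesis using Node.IH[OF that, of m'] by simp
  qed
  then have "sum_list (map (level_count m) ts) \<le> sum_list (map (\<lambda>t. edges t + 1) ts)"
    by (intro sum_list_mono) auto
  then show ?case by simp
qed

lemma planted_height: "planted T \<Longrightarrow> 1 \<le> height T"
  unfolding planted_iff by auto

lemma sum_small_trees:
  "(\<Sum>t\<in>(\<Union>s<M. trees_with_edges s). g ^ (edges t + 1)) = (\<Sum>S=1..M. catalan (S - 1) * g ^ S)"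
proof -
  have "(\<Sum>t\<in>(\<Union>s<M. trees_with_edges s). g ^ (edges t + 1)) = (\<Sum>s<M. catalan s * g ^ (s + 1))"
    by (subst sum.UNION_disjoint)
      (auto simp: finite_trees_with_edges[unfolded trees_with_edges_def] trees_with_edges_def
        simp flip: card_trees_with_edges)
  also have "\<dots> = (\<Sum>S=1..M. catalan (S - 1) * g ^ S)"
    by (induction M) simp_all
  finally show ?thesis .
qed

lemma graft_in_ball_tree:
  assumes "planted T0" "r = height T0"
  shows "graft r F T0 \<in> ball_tree r T0"
proof -
  obtain r' where r: "r = Suc r'" using planted_height[OF assms(1)] assms(2) not0_implies_Suc by force
  have "planted (graft r F T0)"
    using assms(1) level_count_1_graft[of r' F T0] unfolding planted_def r by simp
  moreover have "truncate r (graft r F T0) = T0"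
    using truncate_graft truncate_height assms(2) by simp
  ultimately show ?thesis unfolding ball_tree_def by simp
qed

lemma edges_graft_top:
  "r = height T0 \<Longrightarrow> edges (graft r F T0) = edges T0 + (\<Sum>i<level_count r T0. edges (F i))"
  using edges_graft[of r F T0] truncate_height by simp

text \<open>The tall tree is recognisable by its height, which makes the grafting injective.\<close>

lemma inj_on_graft_one_tall:
  assumes low: "\<And>t. t \<in> S \<Longrightarrow> height t < M"
  shows "inj_on (\<lambda>(i0, G, x). graft r (G(i0 := x)) T0)
           (SIGMA i0:{..<level_count r T0}. SIGMA G:PiE ({..<level_count r T0} - {i0}) (\<lambda>_. S).
              {x. M \<le> height x})"
proof (rule inj_onI, clarsimp)
  let ?K = "level_count r T0"
  fix i0 G x i0' G' x'
  assume i0: "i0 < ?K" "G \<in> PiE ({..<?K} - {i0}) (\<lambda>_. S)" "M \<le> height x"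
    and i0': "i0' < ?K" "G' \<in> PiE ({..<?K} - {i0'}) (\<lambda>_. S)" "M \<le> height x'"
    and eq: "graft r (G(i0 := x)) T0 = graft r (G'(i0' := x')) T0"
  have same: "(G(i0 := x)) i = (G'(i0' := x')) i" if "i < ?K" for i
    using graft_inj[OF eq that] .
  have "i0 = i0'"
  proof (rule ccontr)
    assume ne: "i0 \<noteq> i0'"
    then have "G' i0 \<in> S" using i0(1) i0'(2) by (auto simp: PiE_iff)
    moreover have "x = G' i0" using same[OF i0(1)] ne by simp
    ultimately show False using low i0(3) by fastforce
  qed
  moreover have "x = x'" using same[OF i0(1)] \<open>i0 = i0'\<close> by simp
  moreover have "G = G'"
  proof (rule PiE_ext[OF i0(2)])
    show "G' \<in> PiE ({..<?K} - {i0}) (\<lambda>_. S)" using i0'(2) \<open>i0 = i0'\<close> by simp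
    fix i assume "i \<in> {..<?K} - {i0}"
    then show "G i = G' i" using same[of i] \<open>i0 = i0'\<close> by auto
  qed
  ultimately show "i0 = i0' \<and> G = G' \<and> x = x'" by simp
qed

lemma sum_PiE_prod_const:
  fixes f :: "'a \<Rightarrow> 'c :: comm_semiring_1"
  assumes "finite I" "finite S"
  shows "(\<Sum>G\<in>PiE I (\<lambda>_. S). \<Prod>i\<in>I. f (G i)) = (\<Sum>t\<in>S. f t) ^ card I"
  using prod_sum_PiE[OF assms(1), of "\<lambda>_. S" "\<lambda>_. f"] assms by simp

lemma graft_one_tall_in_ball:
  assumes "planted T0" "r = height T0" "i0 < level_count r T0"
    and "edges T0 + edges x + (\<Sum>i\<in>{..<level_count r T0} - {i0}. edges (G i)) = N"
  shows "graft r (G(i0 := x)) T0 \<in> trees_of_size N \<inter> ball_tree r T0"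
proof -
  have "(\<Sum>i<level_count r T0. edges ((G(i0 := x)) i))
      = edges x + (\<Sum>i\<in>{..<level_count r T0} - {i0}. edges (G i))"
    using assms(3) by (simp add: sum.remove[of _ i0])
  then have "edges (graft r (G(i0 := x)) T0) = N"
    using edges_graft_top[OF assms(2)] assms(4) by simp
  then show ?thesis
    using graft_in_ball_tree[OF assms(1,2)] unfolding trees_of_size_def ball_tree_def by auto
qed

lemma grafts_weight_le_ball_weight:
  fixes k :: real
  assumes k: "1 \<le> k" and T0: "planted T0" "r = height T0" "K = level_count r T0"
    and S: "finite S" "\<And>t. t \<in> S \<Longrightarrow> height t < M"
    and n0: "\<And>i0 G. i0 < K \<Longrightarrow> G \<in> PiE ({..<K} - {i0}) (\<lambda>_. S) \<Longrightarrow>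
               edges T0 + n0 i0 G + (\<Sum>i\<in>{..<K} - {i0}. edges (G i)) = N"
  shows "(\<Sum>i0<K. \<Sum>G\<in>PiE ({..<K} - {i0}) (\<lambda>_. S).
            \<Sum>x\<in>{x\<in>trees_with_edges (n0 i0 G). M \<le> height x}. k ^ (r + height x))
         \<le> (\<Sum>T\<in>trees_of_size N \<inter> ball_tree r T0. k ^ height T)"
proof -
  define DD where "DD = (SIGMA i0:{..<K}. SIGMA G:PiE ({..<K} - {i0}) (\<lambda>_. S).
                           {x\<in>trees_with_edges (n0 i0 G). M \<le> height x})"
  define \<Psi> where "\<Psi> = (\<lambda>(i0, G, x). graft r (G(i0 := x)) T0)"
  have fin: "finite (PiE ({..<K} - {i0}) (\<lambda>_. S))" "finite {x\<in>trees_with_edges n. M \<le> height x}" for i0 n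
    using S(1) finite_trees_with_edges by (auto intro: finite_PiE)
  have "\<Psi> ` DD \<subseteq> trees_of_size N \<inter> ball_tree r T0"
    using graft_one_tall_in_ball[OF T0(1,2)] n0 T0(3)
    unfolding DD_def \<Psi>_def trees_with_edges_def by auto
  then have "(\<Sum>T\<in>\<Psi> ` DD. k ^ height T) \<le> (\<Sum>T\<in>trees_of_size N \<inter> ball_tree r T0. k ^ height T)"
    using finite_trees_of_size k by (intro sum_mono2) auto
  moreover have "inj_on \<Psi> DD"
    unfolding \<Psi>_def DD_def T0(3) by (rule inj_on_subset[OF inj_on_graft_one_tall[of S M]]) (use S in auto)
  moreover have "k ^ (r + height x) \<le> k ^ height (graft r (G(i0 := x)) T0)" if "i0 < K" for i0 G x
    using height_graft_ge[of i0 r T0 "G(i0 := x)"] that T0(3) k by (intro power_increasing) auto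
  then have "(\<Sum>z\<in>DD. k ^ (r + height (snd (snd z)))) \<le> (\<Sum>z\<in>DD. k ^ height (\<Psi> z))"
    unfolding DD_def \<Psi>_def by (intro sum_mono) auto
  ultimately show ?thesis
    unfolding DD_def using fin by (simp add: sum.reindex sum.Sigma split_def)
qed

context critical_trees
begin

lemma q_tall_rescale:
  assumes "\<rho> * q N' \<le> q_tall M n0" "N' = n0 + j"
  shows "k ^ r * \<rho> * height_sum k N' * g ^ j
           \<le> (\<Sum>x\<in>{x\<in>trees_with_edges n0. M \<le> height x}. k ^ (r + height x))"
proof -
  have "g ^ n0 * (\<rho> * height_sum k N' * g ^ j) = \<rho> * q N'"
    unfolding q_def assms(2) by (simp add: power_add mult_ac)
  also have "\<dots> \<le> g ^ n0 * (\<Sum>x\<in>{x\<in>trees_with_edges n0. M \<le> height x}. k ^ height x)"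
    using assms(1) unfolding q_tall_def .
  finally have "\<rho> * height_sum k N' * g ^ j \<le> (\<Sum>x\<in>{x\<in>trees_with_edges n0. M \<le> height x}. k ^ height x)"
    using g_pos by (simp add: mult_le_cancel_left_pos)
  then have "k ^ r * (\<rho> * height_sum k N' * g ^ j)
      \<le> k ^ r * (\<Sum>x\<in>{x\<in>trees_with_edges n0. M \<le> height x}. k ^ height x)"
    by (rule mult_left_mono) (use k_pos in simp)
  then show ?thesis by (simp add: power_add sum_distrib_left mult_ac)
qed

text \<open>Graft onto the \<open>K\<close> top vertices of \<open>T0\<close> one tree of height at least \<open>M\<close> and
  \<open>K - 1\<close> trees with fewer than \<open>M\<close> edges.\<close>

lemma ball_weight_ge:
  fixes T0 :: ptree and r K M N :: nat
  assumes T0: "planted T0" "r = height T0" "K = level_count r T0"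
    and N: "edges T0 + K * M < N"
    and tall: "\<And>n0. N - (edges T0 + K * M) \<le> n0 \<Longrightarrow> \<rho> * q (N - 1) \<le> q_tall M n0"
  shows "real K * k ^ (r - 1) * g ^ (edges T0 - K) * (\<Sum>S=1..M. catalan (S - 1) * g ^ S) ^ (K - 1)
           * \<rho> * (k * height_sum k (N - 1))
         \<le> (\<Sum>T\<in>trees_of_size N \<inter> ball_tree r T0. k ^ height T)"
proof -
  define Small where "Small = (\<Union>s<M. trees_with_edges s)"
  define H where "H = k ^ r * \<rho> * height_sum k (N - 1) * g ^ (edges T0 - K)"
  define f where "f t = g ^ (edges t + 1)" for t
  define n0 where "n0 i0 G = N - edges T0 - (\<Sum>i\<in>{..<K} - {i0}. edges (G i))" for i0 G
  obtain r' where r: "r = Suc r'" using planted_height[OF T0(1)] T0(2) not0_implies_Suc by force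
  have K: "1 \<le> K" "K \<le> edges T0"
    using level_height_pos[of T0] level_le_edges[of r' T0] T0 r by auto
  have card: "card ({..<K} - {i0}) = K - 1" if "i0 < K" for i0 using that by simp
  have small: "(\<Sum>i\<in>{..<K} - {i0}. edges (G i)) \<le> K * M"
    if "i0 < K" "G \<in> PiE ({..<K} - {i0}) (\<lambda>_. Small)" for i0 G
  proof -
    have "edges (G i) < M" if "i \<in> {..<K} - {i0}" for i
      using that \<open>G \<in> PiE ({..<K} - {i0}) (\<lambda>_. Small)\<close>
      by (auto simp: PiE_iff Small_def trees_with_edges_def)
    then have "\<forall>i\<in>{..<K} - {i0}. edges (G i) \<le> M" by (simp add: less_imp_le)
    then show ?thesis
      using sum_bounded_above[of "{..<K} - {i0}" "\<lambda>i. edges (G i)" M] card[OF that(1)]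
      by (simp add: order_trans)
  qed
  have per_graft: "H * (\<Prod>i\<in>{..<K} - {i0}. f (G i))
      \<le> (\<Sum>x\<in>{x\<in>trees_with_edges (n0 i0 G). M \<le> height x}. k ^ (r + height x))"
    if "i0 < K" "G \<in> PiE ({..<K} - {i0}) (\<lambda>_. Small)" for i0 G
  proof -
    have "(\<Sum>i\<in>{..<K} - {i0}. edges (G i) + 1) = (\<Sum>i\<in>{..<K} - {i0}. edges (G i)) + (K - 1)"
      using card[OF that(1)] by (simp add: sum_Suc)
    then have "N - 1 = n0 i0 G + ((edges T0 - K) + (\<Sum>i\<in>{..<K} - {i0}. edges (G i) + 1))"
      unfolding n0_def using small[OF that] N K by simp
    moreover have "\<rho> * q (N - 1) \<le> q_tall M (n0 i0 G)"
      using tall small[OF that] unfolding n0_def by simp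
    ultimately have "k ^ r * \<rho> * height_sum k (N - 1) * g ^ ((edges T0 - K) + (\<Sum>i\<in>{..<K} - {i0}. edges (G i) + 1))
        \<le> (\<Sum>x\<in>{x\<in>trees_with_edges (n0 i0 G). M \<le> height x}. k ^ (r + height x))"
      by (intro q_tall_rescale)
    then show ?thesis unfolding H_def f_def by (simp add: power_add power_sum mult_ac)
  qed
  have "real K * H * (\<Sum>t\<in>Small. f t) ^ (K - 1)
      = (\<Sum>i0<K. \<Sum>G\<in>PiE ({..<K} - {i0}) (\<lambda>_. Small). H * (\<Prod>i\<in>{..<K} - {i0}. f (G i)))"
    using finite_trees_with_edges by (simp add: Small_def sum_PiE_prod_const flip: sum_distrib_left)
  also have "\<dots> \<le> (\<Sum>i0<K. \<Sum>G\<in>PiE ({..<K} - {i0}) (\<lambda>_. Small).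
            \<Sum>x\<in>{x\<in>trees_with_edges (n0 i0 G). M \<le> height x}. k ^ (r + height x))"
    using per_graft by (intro sum_mono) auto
  also have "\<dots> \<le> (\<Sum>T\<in>trees_of_size N \<inter> ball_tree r T0. k ^ height T)"
  proof (rule grafts_weight_le_ball_weight[OF _ T0])
    show "1 \<le> k" "finite Small" using k_gt_1 finite_trees_with_edges by (auto simp: Small_def)
    show "height t < M" if "t \<in> Small" for t
      using that height_le_edges[of t] unfolding Small_def trees_with_edges_def by auto
    show "edges T0 + n0 i0 G + (\<Sum>i\<in>{..<K} - {i0}. edges (G i)) = N"
      if "i0 < K" "G \<in> PiE ({..<K} - {i0}) (\<lambda>_. Small)" for i0 G
      using small[OF that] N unfolding n0_def by simp
  qed
  finally show ?thesis
    unfolding H_def f_def Small_def sum_small_trees r by (simp add: mult_ac)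
qed

end

section \<open>The lower bound\<close>

lemma exp_convergence_ratio_bound:
  fixes q p :: "nat \<Rightarrow> real"
  assumes L: "0 < L" and \<theta>: "0 < \<theta>" "\<theta> < 1" and conv: "\<And>n. \<bar>q n - L\<bar> \<le> C * \<theta> ^ n"
    and close: "\<And>n. q n - p n \<le> B * \<zeta> ^ n" and B: "0 \<le> B" and \<zeta>: "0 \<le> \<zeta>" "\<zeta> < 1"
  shows "\<exists>c \<theta>'. 0 < \<theta>' \<and> \<theta>' < 1 \<and>
           (\<forall>\<^sub>F N in sequentially. \<forall>n. N - D \<le> n \<longrightarrow> (1 - c * \<theta>' ^ N) * q (N - 1) \<le> p n)"
proof -
  have C: "0 \<le> C" using conv[of 0] by simp
  define \<theta>' where "\<theta>' = max \<theta> \<zeta>"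
  have \<theta>': "0 < \<theta>'" "\<theta>' < 1" "\<theta> \<le> \<theta>'" "\<zeta> \<le> \<theta>'" unfolding \<theta>'_def using \<theta> \<zeta> by auto
  define A where "A = (2 * C + B) / \<theta>' ^ (D + 1)"
  define c where "c = 2 * A / L"
  have "(\<lambda>n. C * \<theta> ^ n) \<longlonglongrightarrow> 0" using \<theta> by (intro tendsto_mult_right_zero LIMSEQ_power_zero) auto
  then have "\<forall>\<^sub>F n in sequentially. C * \<theta> ^ n < L / 2" using L by (intro order_tendstoD) auto
  then obtain N1 where N1: "\<And>n. N1 \<le> n \<Longrightarrow> C * \<theta> ^ n < L / 2" by (auto simp: eventually_sequentially)
  have "(1 - c * \<theta>' ^ N) * q (N - 1) \<le> p n" if N: "N1 + D + 1 \<le> N" and n: "N - D \<le> n" for N n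
  proof -
    have tail: "x ^ m \<le> \<theta>' ^ N / \<theta>' ^ (D + 1)" if "0 \<le> x" "x \<le> \<theta>'" "N - (D + 1) \<le> m" for x m
    proof -
      have "x ^ m \<le> \<theta>' ^ m" using that by (intro power_mono) auto
      also have "\<dots> \<le> \<theta>' ^ (N - (D + 1))" using that \<theta>' by (intro power_decreasing) auto
      also have "N = (N - (D + 1)) + (D + 1)" using N by simp
      then have "\<theta>' ^ N = \<theta>' ^ (N - (D + 1)) * \<theta>' ^ (D + 1)" by (metis power_add)
      then have "\<theta>' ^ (N - (D + 1)) = \<theta>' ^ N / \<theta>' ^ (D + 1)" using \<theta>' by simp
      finally show ?thesis .
    qed
    have "C * \<theta> ^ (N - 1) + C * \<theta> ^ n + B * \<zeta> ^ n
        \<le> C * (\<theta>' ^ N / \<theta>' ^ (D + 1)) + C * (\<theta>' ^ N / \<theta>' ^ (D + 1)) + B * (\<theta>' ^ N / \<theta>' ^ (D + 1))"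
      using tail[of \<theta> "N - 1"] tail[of \<theta> n] tail[of \<zeta> n] \<theta> \<theta>' \<zeta> n C B
      by (intro add_mono mult_left_mono) auto
    also have "\<dots> = A * \<theta>' ^ N" unfolding A_def using \<theta>' by (simp add: divide_simps) (simp add: algebra_simps)
    also have "\<dots> = c * \<theta>' ^ N * (L / 2)" unfolding c_def using L by simp
    also have "\<dots> \<le> c * \<theta>' ^ N * q (N - 1)"
    proof (rule mult_left_mono)
      have "C * \<theta> ^ (N - 1) < L / 2" using N1 N by simp
      then show "L / 2 \<le> q (N - 1)" using conv[of "N - 1"] by (simp add: abs_le_iff)
      show "0 \<le> c * \<theta>' ^ N" unfolding c_def A_def using C B L \<theta>' by simp
    qed
    finally have "C * \<theta> ^ (N - 1) + C * \<theta> ^ n + B * \<zeta> ^ n \<le> c * \<theta>' ^ N * q (N - 1)" .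
    then show ?thesis using conv[of n] conv[of "N - 1"] close[of n] by (simp add: algebra_simps)
  qed
  then show ?thesis using \<theta>' by (intro exI[of _ c] exI[of _ \<theta>']) (auto simp: eventually_sequentially)
qed

lemma exp_height_weight: "k = exp (- \<mu>) \<Longrightarrow> exp (- \<mu> * real h) = k ^ h"
  by (simp add: exp_of_nat_mult[symmetric] mult.commute)

lemma Zpart_eq: "k = exp (- \<mu>) \<Longrightarrow> Zpart \<mu> (Suc n) = k * height_sum k n"
  unfolding Zpart_def exp_height_weight trees_of_size_Suc height_sum_def
  by (subst sum.reindex) (auto simp: inj_on_def sum_distrib_left)

lemma nu_eq:
  "k = exp (- \<mu>) \<Longrightarrow> nu \<mu> N A = (\<Sum>T\<in>trees_of_size N \<inter> A. k ^ height T) / Zpart \<mu> N"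
  unfolding nu_def exp_height_weight ..

lemma geometric_in_bigo_exp:
  assumes "0 < \<theta>" shows "(\<lambda>N. c * \<theta> ^ N) \<in> O(\<lambda>N. exp (- (- ln \<theta>) * real N))"
proof -
  have "exp (- (- ln \<theta>) * real N) = \<theta> ^ N" for N
    using exp_of_nat_mult[of N "ln \<theta>"] assms by (simp add: mult.commute)
  then show ?thesis by simp
qed

context critical_trees
begin

lemma q_ratio_bound:
  "\<exists>c \<theta>'. 0 < \<theta>' \<and> \<theta>' < 1 \<and>
     (\<forall>\<^sub>F N in sequentially. \<forall>n. N - D \<le> n \<longrightarrow> (1 - c * \<theta>' ^ N) * q (N - 1) \<le> q_tall M n)"
proof -
  obtain L C \<theta> where conv: "0 < \<theta>" "\<theta> < 1" "\<And>n. \<bar>q n - L\<bar> \<le> C * \<theta> ^ n"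
    using q_converges by blast
  show ?thesis
    by (rule exp_convergence_ratio_bound[OF q_limit_pos[OF conv] conv q_minus_q_tall_le])
      (use k_pos g_pos four_g_less_1 in auto)
qed

lemma nu_ball_ge:
  assumes "k = exp (- \<mu>)" and T0: "planted T0" "r = height T0" "K = level_count r T0"
    and N: "edges T0 + K * M < N"
    and tall: "\<And>n0. N - (edges T0 + K * M) \<le> n0 \<Longrightarrow> \<rho> * q (N - 1) \<le> q_tall M n0"
  shows "real K * k ^ (r - 1) * g ^ (edges T0 - K) * (\<Sum>S=1..M. catalan (S - 1) * g ^ S) ^ (K - 1) * \<rho>
           \<le> nu \<mu> N (ball_tree r T0)"
proof -
  obtain n where n: "N = Suc n" using N by (cases N) auto
  show ?thesis
    using ball_weight_ge[OF T0 N tall] height_sum_pos[of n] k_pos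
    unfolding nu_eq[OF assms(1)] n Zpart_eq[OF assms(1)] by (simp add: pos_le_divide_eq)
qed

end

theorem mainTheorem5:
  fixes \<mu> k gc :: real and T0 :: ptree and r K M :: nat
  assumes "\<mu> < 0"
    and "k = exp (- \<mu>)"
    and "gc = k / (1 + k)^2"
    and "planted T0"
    and "r = height T0"
    and "K = level_count r T0"
  shows "\<exists>d>0. \<exists>f :: nat \<Rightarrow> real. f \<in> O(\<lambda>N. exp (- d * real N)) \<and>
          (\<forall>\<^sub>F N in sequentially.
             nu \<mu> N (ball_tree r T0) \<ge>
               real K * k ^ (r - 1) * gc ^ (edges T0 - K)
               * (\<Sum>S=1..M. catalan (S - 1) * gc ^ S) ^ (K - 1) * (1 + f N))"
proof -
  interpret critical_trees k gc using assms(1-3) by unfold_locales simp_all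
  obtain c \<theta> where \<theta>: "0 < \<theta>" "\<theta> < 1" and
    ratio: "\<forall>\<^sub>F N in sequentially. \<forall>n. N - (edges T0 + K * M) \<le> n \<longrightarrow>
              (1 - c * \<theta> ^ N) * q (N - 1) \<le> q_tall M n"
    using q_ratio_bound by blast
  have bound: "\<forall>\<^sub>F N in sequentially. real K * k ^ (r - 1) * gc ^ (edges T0 - K)
      * (\<Sum>S=1..M. catalan (S - 1) * gc ^ S) ^ (K - 1) * (1 + - c * \<theta> ^ N) \<le> nu \<mu> N (ball_tree r T0)"
    using ratio eventually_gt_at_top[of "edges T0 + K * M"]
    by eventually_elim (use nu_ball_ge[OF assms(2,4-6)] in simp)
  have "(\<lambda>N. - c * \<theta> ^ N) \<in> O(\<lambda>N. exp (- (- ln \<theta>) * real N))"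
    by (rule geometric_in_bigo_exp[OF \<theta>(1)])
  with bound \<theta> show ?thesis
    by (intro exI[of _ "- ln \<theta>"] conjI exI[of _ "\<lambda>N. - c * \<theta> ^ N"]) simp_all
qed

end
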